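(* Let $G=(V,E)$ be a connected graph with $n\ge2$ vertices, with adjacency eigenvalues $\lambda_1(G)\ge\lambda_2(G)\ge\cdots\ge\lambda_n(G)$. Let $\rho_V(G)=\max_{v\in V}\rho(G-v)$ and $\rho_E(G)=\max_{e\in E}\rho(G-e)$. Then: (a) $\lambda_2(G)<\rho_V(G)\le\rho_E(G)$; (b) if $G$ is non-bipartite, then $-\lambda_n(G)<\rho_E(G)$; (c) if $\Gamma(G)$ is nonempty, then $\rho_\Gamma(G)<\rho_E(G)$, where $\rho_\Gamma(G)=\max_{G_\pi\in\Gamma(G)}\rho(G_\pi)$.
   Context: All graphs are finite, simple and undirected. $G-v$ is obtained by deleting vertex $v$ and its incident edges; $G-e$ is obtained by deleting edge $e$ (keeping all vertices). $\rho(\cdot)$ denotes the spectral radius (largest modulus of an eigenvalue) of the adjacency matrix. A signed graph $G_\pi$ is a pair $(G,\pi)$ with $\pi:E\to\{+1,-1\}$, with adjacency matrix having entry $\pi(\{i,j\})$ for adjacent $i,j$ and $0$ otherwise; $\rho(G_\pi)$ is the largest modulus of its eigenvalues. $\Gamma(G)=\{G_\pi:\ \pi:E\to\{\pm1\},\ \rho(G_\pi)<\rho(G)\}$. *)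

theory Defs
  imports "Jordan_Normal_Form.Spectral_Radius" "HOL-Library.Multiset"
begin

definition simple_graph :: "'a set \<Rightarrow> 'a set set \<Rightarrow> bool" where
  "simple_graph V E \<longleftrightarrow> finite V \<and> (\<forall>e\<in>E. e \<subseteq> V \<and> card e = 2)"

definition connected_graph :: "'a set \<Rightarrow> 'a set set \<Rightarrow> bool" where
  "connected_graph V E \<longleftrightarrow>
     (\<forall>u\<in>V. \<forall>w\<in>V. (\<lambda>x y. {x, y} \<in> E)\<^sup>*\<^sup>* u w)"

definition bipartite_graph :: "'a set \<Rightarrow> 'a set set \<Rightarrow> bool" where
  "bipartite_graph V E \<longleftrightarrow>
     (\<exists>S. S \<subseteq> V \<and> (\<forall>x y. {x, y} \<in> E \<longrightarrow> (x \<in> S \<longleftrightarrow> y \<notin> S)))"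

definition del_vertex_V :: "'a set \<Rightarrow> 'a \<Rightarrow> 'a set" where
  "del_vertex_V V v = V - {v}"

definition del_vertex_E :: "'a set set \<Rightarrow> 'a \<Rightarrow> 'a set set" where
  "del_vertex_E E v = {e \<in> E. v \<notin> e}"

definition del_edge_E :: "'a set set \<Rightarrow> 'a set \<Rightarrow> 'a set set" where
  "del_edge_E E e = E - {e}"

text \<open>Signed adjacency matrix, vertices ordered increasingly (any ordering gives a
  permutation-similar matrix). The ordinary adjacency matrix is the all-positive signing.\<close>

definition signed_adj_mat :: "'a::linorder set \<Rightarrow> 'a set set \<Rightarrow> ('a set \<Rightarrow> int) \<Rightarrow> complex mat" where
  "signed_adj_mat V E \<pi> =
     (let vs = sorted_list_of_set V in
      mat (card V) (card V)
        (\<lambda>(i, j). if {vs ! i, vs ! j} \<in> E then of_int (\<pi> {vs ! i, vs ! j}) else 0))"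

definition adj_mat :: "'a::linorder set \<Rightarrow> 'a set set \<Rightarrow> complex mat" where
  "adj_mat V E = signed_adj_mat V E (\<lambda>_. 1)"

definition rho :: "'a::linorder set \<Rightarrow> 'a set set \<Rightarrow> real" where
  "rho V E = spectral_radius (adj_mat V E)"

definition rho_signed :: "'a::linorder set \<Rightarrow> 'a set set \<Rightarrow> ('a set \<Rightarrow> int) \<Rightarrow> real" where
  "rho_signed V E \<pi> = spectral_radius (signed_adj_mat V E \<pi>)"

text \<open>Adjacency eigenvalues (with multiplicity, real parts; they are real for a
  symmetric real matrix) in non-increasing order: lambda V E k for k = 1..n.\<close>

definition eigenvalues_desc :: "complex mat \<Rightarrow> real list" where
  "eigenvalues_desc A = rev (sorted_list_of_multiset (image_mset Re (proots (char_poly A))))"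

definition lambda :: "'a::linorder set \<Rightarrow> 'a set set \<Rightarrow> nat \<Rightarrow> real" where
  "lambda V E k = eigenvalues_desc (adj_mat V E) ! (k - 1)"

definition rho_V :: "'a::linorder set \<Rightarrow> 'a set set \<Rightarrow> real" where
  "rho_V V E = Max ((\<lambda>v. rho (del_vertex_V V v) (del_vertex_E E v)) ` V)"

definition rho_E :: "'a::linorder set \<Rightarrow> 'a set set \<Rightarrow> real" where
  "rho_E V E = Max ((\<lambda>e. rho V (del_edge_E E e)) ` E)"

text \<open>Signings: functions with values +-1 on the edges (values off E are irrelevant).\<close>

definition signing :: "'a set set \<Rightarrow> ('a set \<Rightarrow> int) \<Rightarrow> bool" where
  "signing E \<pi> \<longleftrightarrow> (\<forall>e\<in>E. \<pi> e = 1 \<or> \<pi> e = -1)"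

definition Gamma :: "'a::linorder set \<Rightarrow> 'a set set \<Rightarrow> ('a set \<Rightarrow> int) set" where
  "Gamma V E = {\<pi>. signing E \<pi> \<and> rho_signed V E \<pi> < rho V E}"

definition rho_Gamma :: "'a::linorder set \<Rightarrow> 'a set set \<Rightarrow> real" where
  "rho_Gamma V E = Max (rho_signed V E ` Gamma V E)"

end

theory Submission
  imports Defs Jordan_Normal_Form.Jordan_Normal_Form_Uniqueness
begin

text \<open>Everything rests on the Rayleigh quotient of the real symmetric adjacency matrix \<open>A\<close>
  (diagonalized via its Jordan normal form) and on Perron-Frobenius for connected graphs:
  the top eigenvalue is simple with a nowhere-zero eigenvector.

  (a) Combining the Perron vector with an eigenvector of \<open>\<lambda>\<^sub>2\<close>, which is orthogonal to it,
  gives a vector vanishing at some vertex \<open>v\<close> whose Rayleigh quotient exceeds \<open>\<lambda>\<^sub>2\<close>; hence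
  \<open>\<lambda>\<^sub>2 < \<rho>(G - v)\<close>. Extending a Perron vector of \<open>G - v\<close> by zero shows
  \<open>\<rho>(G - v) \<le> \<rho>(G - e)\<close> for any edge \<open>e\<close> at \<open>v\<close>.

  (b), (c) Let \<open>x\<close> be an eigenvector of a signed adjacency matrix \<open>B\<close> for an eigenvalue of
  modulus \<open>r\<close>, and suppose \<open>\<rho>(G - e) \<le> r\<close> for every edge \<open>e\<close>. If some edge term
  \<open>x\<^sub>i B\<^sub>i\<^sub>j x\<^sub>j\<close> had the wrong sign, deleting that edge from \<open>\<bar>B\<bar>\<close> would leave
  \<open>\<bar>x\<bar>\<^sup>T \<bar>B\<bar>\<^sub>e \<bar>x\<bar> > r \<bar>x\<bar>\<^sup>2\<close>. So all edge terms share one sign and \<open>x\<close> has no zero.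
  For \<open>B = A\<close> and \<open>r = -\<lambda>\<^sub>n\<close> this makes \<open>x\<close> alternate along edges, so \<open>G\<close> is bipartite;
  for a signing with \<open>r = \<rho>(G\<^sub>\<pi>)\<close> it makes \<open>G\<^sub>\<pi>\<close> switching equivalent to \<open>\<plusminus>G\<close>, so
  \<open>\<rho>(G\<^sub>\<pi>) = \<rho>(G)\<close>.\<close>

section \<open>Hermitian matrices are diagonalizable\<close>

lemma index_mult_mat_vec_sum:
  assumes "C \<in> carrier_mat n n" "v \<in> carrier_vec n" "i < n"
  shows "(C *\<^sub>v v) $ i = (\<Sum>j<n. C $$ (i,j) * v $ j)"
  using assms by (auto simp: scalar_prod_def atLeast0LessThan intro!: sum.cong)

lemma index_mult_mat_sum:
  assumes "X \<in> carrier_mat n n" "Y \<in> carrier_mat n n" "i < n" "j < n"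
  shows "(X * Y) $$ (i,j) = (\<Sum>k<n. X $$ (i,k) * Y $$ (k,j))"
  using assms by (auto simp: scalar_prod_def atLeast0LessThan intro!: sum.cong)

lemma hermitian_eigenvalue_real:
  fixes A :: "complex mat"
  assumes herm: "\<forall>i<n. \<forall>j<n. cnj (A$$(i,j)) = A$$(j,i)"
    and ev: "\<forall>i<n. (\<Sum>j<n. A$$(i,j) * w j) = a * w i"
    and nz: "i0 < n" "w i0 \<noteq> 0"
  shows "Im a = 0"
proof -
  define L where "L = (\<Sum>i<n. cnj (w i) * (\<Sum>j<n. A$$(i,j) * w j))"
  have "cnj L = (\<Sum>i<n. \<Sum>j<n. w i * cnj (A$$(i,j)) * cnj (w j))"
    unfolding L_def by (simp add: sum_distrib_left mult.assoc)
  also have "\<dots> = (\<Sum>i<n. \<Sum>j<n. w i * A$$(j,i) * cnj (w j))"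
    using herm by (intro sum.cong refl) auto
  also have "\<dots> = L" unfolding L_def sum_distrib_left
    by (subst sum.swap) (auto intro!: sum.cong simp: ac_simps)
  finally have cL: "cnj L = L" .
  have "L = (\<Sum>i<n. cnj (w i) * (a * w i))"
    unfolding L_def using ev by (intro sum.cong refl) auto
  also have "\<dots> = a * (\<Sum>i<n. of_real ((cmod (w i))^2))"
    by (simp only: complex_norm_square sum_distrib_left) (simp add: ac_simps)
  finally have L2: "L = a * (\<Sum>i<n. of_real ((cmod (w i))^2))" .
  define s where "s = (\<Sum>i<n. (cmod (w i))^2)"
  have "s \<ge> (cmod (w i0))^2" unfolding s_def
    using nz by (intro member_le_sum) auto
  moreover have "(cmod (w i0))^2 > 0" using nz by auto
  ultimately have s: "s > 0" by linarith
  have L3: "L = a * of_real s" unfolding L2 s_def by simp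
  from cL[unfolded L3] have "cnj a * of_real s = a * of_real s" by simp
  hence "cnj a = a" using s by (metis mult_cancel_right of_real_eq_0_iff less_irrefl)
  thus ?thesis by (metis Reals_cnj_iff complex_is_Real_iff)
qed

lemma hermitian_char_matrix_kernel_square:
  fixes A :: "complex mat"
  assumes A: "A \<in> carrier_mat n n" and herm: "\<forall>i<n. \<forall>j<n. cnj (A$$(i,j)) = A$$(j,i)"
    and y: "y \<in> carrier_vec n"
    and C: "C = char_matrix A a"
    and z: "C *\<^sub>v (C *\<^sub>v y) = 0\<^sub>v n"
  shows "C *\<^sub>v y = 0\<^sub>v n"
proof (rule ccontr)
  assume ne: "C *\<^sub>v y \<noteq> 0\<^sub>v n"
  have Cc: "C \<in> carrier_mat n n" using A C by auto
  define w where "w = (\<lambda>i. (C *\<^sub>v y) $ i)"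
  have Cij: "\<And>i j. i < n \<Longrightarrow> j < n \<Longrightarrow> C $$ (i,j) = A $$ (i,j) - (if i = j then a else 0)"
    using A unfolding C char_matrix_def by auto
  have wv: "C *\<^sub>v y \<in> carrier_vec n" using Cc y by auto
  from ne wv obtain i0 where i0: "i0 < n" "w i0 \<noteq> 0" unfolding w_def
    by (metis eq_vecI carrier_vecD index_zero_vec(1) index_zero_vec(2))
  have Cw: "\<And>i. i < n \<Longrightarrow> (\<Sum>j<n. C $$ (i,j) * w j) = 0"
  proof -
    fix i assume i: "i < n"
    have "(C *\<^sub>v (C *\<^sub>v y)) $ i = 0" using z i by simp
    thus "(\<Sum>j<n. C $$ (i,j) * w j) = 0" using index_mult_mat_vec_sum[OF Cc wv i] unfolding w_def by simp
  qed
  have ev: "\<forall>i<n. (\<Sum>j<n. A$$(i,j) * w j) = a * w i"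
  proof (intro allI impI)
    fix i assume i: "i < n"
    have "(\<Sum>j<n. C $$ (i,j) * w j) = (\<Sum>j<n. A $$ (i,j) * w j - (if i = j then a * w j else 0))"
      using i by (intro sum.cong refl) (simp add: Cij ring_distribs)
    also have "\<dots> = (\<Sum>j<n. A $$ (i,j) * w j) - a * w i"
      using i by (simp add: sum_subtractf)
    finally show "(\<Sum>j<n. A$$(i,j) * w j) = a * w i" using Cw[OF i] by simp
  qed
  have ar: "Im a = 0" by (rule hermitian_eigenvalue_real[OF herm ev i0])
  hence ca: "cnj a = a" by (simp add: complex_eq_iff)
  have Cherm: "\<And>i j. i < n \<Longrightarrow> j < n \<Longrightarrow> cnj (C $$ (i,j)) = C $$ (j,i)"
    using Cij herm ca by auto
  have "(\<Sum>i<n. cnj (w i) * w i) = (\<Sum>i<n. cnj (w i) * (\<Sum>j<n. C$$(i,j) * y $ j))"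
    unfolding w_def using index_mult_mat_vec_sum[OF Cc y] by simp
  also have "\<dots> = (\<Sum>j<n. (\<Sum>i<n. cnj (w i) * C$$(i,j)) * y $ j)"
    by (simp add: sum_distrib_left sum_distrib_right ac_simps) (subst sum.swap, simp)
  also have "\<dots> = (\<Sum>j<n. cnj (\<Sum>i<n. C$$(j,i) * w i) * y $ j)"
    using Cherm by (intro sum.cong refl) (auto simp: mult.commute)
  also have "\<dots> = 0" using Cw by simp
  finally have "(\<Sum>i<n. cnj (w i) * w i) = 0" .
  hence "(\<Sum>i<n. (cmod (w i))^2) = 0"
    by (metis (no_types, lifting) complex_norm_square mult.commute of_real_eq_0_iff of_real_sum sum.cong)
  hence "(cmod (w i0))^2 = 0" using i0 by (subst (asm) sum_nonneg_eq_0_iff) auto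
  thus False using i0 by simp
qed

lemma hermitian_char_matrix_kernel_power:
  fixes A :: "complex mat"
  assumes A: "A \<in> carrier_mat n n" and herm: "\<forall>i<n. \<forall>j<n. cnj (A$$(i,j)) = A$$(j,i)"
  shows "mat_kernel (char_matrix A a ^\<^sub>m Suc k) = mat_kernel (char_matrix A a)"
proof -
  define C where "C = char_matrix A a"
  have Cc: "C \<in> carrier_mat n n" using A C_def by auto
  have pc: "\<And>k. C ^\<^sub>m k \<in> carrier_mat n n" using Cc by auto
  have key: "\<And>x. x \<in> carrier_vec n \<Longrightarrow> (C ^\<^sub>m Suc k *\<^sub>v x = 0\<^sub>v n) = (C *\<^sub>v x = 0\<^sub>v n)"
  proof (induct k)
    case 0
    then show ?case using Cc by auto
  next
    case (Suc k)
    have "C ^\<^sub>m Suc (Suc k) *\<^sub>v x = (C ^\<^sub>m Suc k * C) *\<^sub>v x"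
      by (simp only: pow_mat.simps)
    also have "\<dots> = C ^\<^sub>m Suc k *\<^sub>v (C *\<^sub>v x)"
      by (rule assoc_mult_mat_vec[OF pc Cc Suc(2)])
    finally have "C ^\<^sub>m Suc (Suc k) *\<^sub>v x = C ^\<^sub>m Suc k *\<^sub>v (C *\<^sub>v x)" .
    moreover have "C *\<^sub>v x \<in> carrier_vec n" using Cc Suc(2) by auto
    ultimately have "(C ^\<^sub>m Suc (Suc k) *\<^sub>v x = 0\<^sub>v n) = (C *\<^sub>v (C *\<^sub>v x) = 0\<^sub>v n)"
      using Suc(1) by simp
    also have "\<dots> = (C *\<^sub>v x = 0\<^sub>v n)"
      using hermitian_char_matrix_kernel_square[OF A herm Suc(2) C_def] Cc Suc(2) by auto
    finally show ?case .
  qed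
  have "mat_kernel (C ^\<^sub>m Suc k) = {x. x \<in> carrier_vec n \<and> C ^\<^sub>m Suc k *\<^sub>v x = 0\<^sub>v n}"
    by (rule mat_kernel[OF pc])
  also have "\<dots> = {x. x \<in> carrier_vec n \<and> C *\<^sub>v x = 0\<^sub>v n}" using key by blast
  also have "\<dots> = mat_kernel C" by (rule mat_kernel[OF Cc, symmetric])
  finally show ?thesis unfolding C_def .
qed

lemma hermitian_dim_gen_eigenspace:
  fixes A :: "complex mat"
  assumes A: "A \<in> carrier_mat n n" and herm: "\<forall>i<n. \<forall>j<n. cnj (A$$(i,j)) = A$$(j,i)"
  shows "dim_gen_eigenspace A a (Suc k) = dim_gen_eigenspace A a 1"
proof -
  have d1: "dim_col (char_matrix A a ^\<^sub>m Suc k) = n" "dim_col (char_matrix A a ^\<^sub>m 1) = n" using A by (auto simp: char_matrix_def)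
  show ?thesis unfolding dim_gen_eigenspace_def kernel_dim_def d1
    using hermitian_char_matrix_kernel_power[OF A herm, of a k] hermitian_char_matrix_kernel_power[OF A herm, of a 0] by simp
qed

lemma sum_list_ge_length: "(\<forall>x\<in>set xs. (1::nat) \<le> x) \<Longrightarrow> sum_list xs \<ge> length xs"
  by (induct xs) auto

lemma sum_list_eq_length_imp_ones: "(\<forall>x\<in>set xs. (1::nat) \<le> x) \<Longrightarrow> sum_list xs = length xs \<Longrightarrow> \<forall>x\<in>set xs. x = 1"
proof (induct xs)
  case (Cons a xs)
  have "sum_list xs \<ge> length xs" using Cons(2) by (intro sum_list_ge_length) auto
  then show ?case using Cons by auto
qed simp

lemma hermitian_jordan_blocks_size_one:
  fixes A :: "complex mat"
  assumes A: "A \<in> carrier_mat n n" and herm: "\<forall>i<n. \<forall>j<n. cnj (A$$(i,j)) = A$$(j,i)"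
    and jnf: "jordan_nf A n_as"
  shows "\<forall>p\<in>set n_as. fst p = 1"
proof
  fix p assume p: "p \<in> set n_as"
  obtain m e where pe: "p = (m,e)" by force
  from jnf have sim: "similar_mat A (jordan_matrix n_as)" and z: "0 \<notin> fst ` set n_as"
    unfolding jordan_nf_def by auto
  from similar_matD[OF sim] obtain N where "A \<in> carrier_mat N N" "jordan_matrix n_as \<in> carrier_mat N N" by auto
  hence sn: "sum_list (map fst n_as) = n" using A unfolding carrier_mat_def by auto
  define xs where "xs = map fst [(m, e')\<leftarrow>n_as . e' = e]"
  have xs_le: "\<forall>x\<in>set xs. 1 \<le> x \<and> x \<le> n"
  proof
    fix x assume "x \<in> set xs"
    then obtain e' where x: "(x,e') \<in> set n_as" unfolding xs_def by auto
    hence "x \<noteq> 0" using z by force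
    moreover have "x \<le> sum_list (map fst n_as)"
      by (rule member_le_sum_list) (use x in force, simp)
    ultimately show "1 \<le> x \<and> x \<le> n" using sn by auto
  qed
  have "dim_gen_eigenspace A e (Suc n) = dim_gen_eigenspace A e 1" by (rule hermitian_dim_gen_eigenspace[OF A herm])
  hence "(\<Sum>x\<leftarrow>xs. min (Suc n) x) = (\<Sum>x\<leftarrow>xs. min 1 x)"
    unfolding dim_gen_eigenspace[OF jnf] xs_def by simp
  moreover have "map (min (Suc n)) xs = xs" using xs_le by (induct xs) auto
  moreover have "sum_list (map (min 1) xs) = length xs" using xs_le by (induct xs) auto
  ultimately have "sum_list xs = length xs" by simp
  from sum_list_eq_length_imp_ones[OF _ this] xs_le have "\<forall>x\<in>set xs. x = 1" by auto
  moreover have "m \<in> set xs" using p pe unfolding xs_def by force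
  ultimately show "fst p = 1" using pe by auto
qed

lemma jordan_matrix_size_one_blocks:
  "(\<forall>p\<in>set n_as. fst p = 1) \<Longrightarrow> jordan_matrix n_as =
     mat (length n_as) (length n_as) (\<lambda>(i,j). if i = j then snd (n_as ! i) else 0)"
proof (induct n_as)
  case Nil
  show ?case unfolding jordan_matrix_def by (intro eq_matI) auto
next
  case (Cons p n_as)
  obtain m a where p: "p = (m,a)" by force
  with Cons have m: "m = 1" by auto
  have IH: "jordan_matrix n_as = mat (length n_as) (length n_as) (\<lambda>(i,j). if i = j then snd (n_as ! i) else 0)"
    using Cons by auto
  have sl: "sum_list (map fst n_as) = length n_as" using Cons(2)
    by (induct n_as) auto
  show ?case unfolding p m jordan_matrix_Cons sl IH
    by (intro eq_matI) (auto simp: jordan_block_def nth_Cons')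
qed

lemma hermitian_diagonalization:
  fixes A :: "complex mat"
  assumes A: "A \<in> carrier_mat n n" and herm: "\<forall>i<n. \<forall>j<n. cnj (A$$(i,j)) = A$$(j,i)"
  shows "\<exists>P Q dd. P \<in> carrier_mat n n \<and> Q \<in> carrier_mat n n \<and> P * Q = 1\<^sub>m n \<and> Q * P = 1\<^sub>m n
     \<and> A * P = P * mat n n (\<lambda>(i,j). if i = j then dd i else 0)
     \<and> char_poly A = (\<Prod>k\<leftarrow>[0..<n]. [:- dd k, 1:])"
proof -
  from char_poly_factorized[OF A] obtain as where "char_poly A = (\<Prod>a\<leftarrow>as. [:- a, 1:])" by auto
  from jordan_nf_exists[OF A this] obtain n_as where jnf: "jordan_nf A n_as" by auto
  have ones: "\<forall>p\<in>set n_as. fst p = 1" by (rule hermitian_jordan_blocks_size_one[OF A herm jnf])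
  from jnf have sim: "similar_mat A (jordan_matrix n_as)" unfolding jordan_nf_def by auto
  from similar_matD[OF sim] obtain N where "A \<in> carrier_mat N N" "jordan_matrix n_as \<in> carrier_mat N N" by auto
  hence sn: "sum_list (map fst n_as) = n" using A unfolding carrier_mat_def by auto
  have sl: "sum_list (map fst n_as) = length n_as" using ones by (induct n_as) auto
  define dd where "dd = (\<lambda>k. snd (n_as ! k))"
  define D where "D = mat n n (\<lambda>(i,j). if i = j then dd i else 0)"
  have JD: "jordan_matrix n_as = D" unfolding D_def dd_def jordan_matrix_size_one_blocks[OF ones]
    using sn sl by simp
  from sim[unfolded similar_mat_def similar_mat_wit_def JD] obtain P Q where
    PQ: "{A, D, P, Q} \<subseteq> carrier_mat n n" "P * Q = 1\<^sub>m n" "Q * P = 1\<^sub>m n" "A = P * D * Q"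
    using A by (auto simp: Let_def)
  have P: "P \<in> carrier_mat n n" and Q: "Q \<in> carrier_mat n n" and Dc: "D \<in> carrier_mat n n" using PQ by auto
  have "A * P = P * D * Q * P" using PQ by simp
  also have "\<dots> = P * D * (Q * P)" using P Q Dc by (simp add: assoc_mult_mat[of _ n n _ n _ n])
  also have "\<dots> = P * D" using PQ P Dc by simp
  finally have AP: "A * P = P * D" .
  have "char_poly A = (\<Prod>(m, a)\<leftarrow>n_as. [:- a, 1:] ^ m)" by (rule jordan_nf_char_poly[OF jnf])
  also have "\<dots> = (\<Prod>p\<leftarrow>n_as. [:- snd p, 1:])" using ones
    by (induct n_as) (auto split: prod.splits)
  also have "\<dots> = (\<Prod>k\<leftarrow>[0..<n]. [:- dd k, 1:])"
  proof -
    have "n_as = map (\<lambda>k. n_as ! k) [0..<n]" using sn sl by (metis map_nth)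
    hence "map (\<lambda>p. [:- snd p, 1:]) n_as = map (\<lambda>k. [:- dd k, 1:]) [0..<n]" unfolding dd_def
      by (metis (no_types, lifting) map_eq_conv map_map o_apply)
    thus ?thesis by simp
  qed
  finally show ?thesis using P Q PQ AP unfolding D_def by blast
qed

lemma sum_swap3: "(\<Sum>i<n. \<Sum>l<n. \<Sum>k<n. f i l k) = (\<Sum>l<n. \<Sum>k<n. \<Sum>i<(n::nat). f i l k)"
proof -
  have "(\<Sum>i<n. \<Sum>l<n. \<Sum>k<n. f i l k) = (\<Sum>l<n. \<Sum>i<n. \<Sum>k<n. f i l k)" by (rule sum.swap)
  also have "\<dots> = (\<Sum>l<n. \<Sum>k<n. \<Sum>i<n. f i l k)" by (rule sum.cong[OF refl], rule sum.swap)
  finally show ?thesis .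
qed

lemma hermitian_eigvecs_orthogonal:
  fixes h p :: "nat \<Rightarrow> nat \<Rightarrow> complex" and b :: "nat \<Rightarrow> real"
  assumes herm: "\<forall>i<n. \<forall>j<n. cnj (h i j) = h j i"
    and hp: "\<forall>i<n. \<forall>k<n. (\<Sum>j<n. h i j * p j k) = p i k * of_real (b k)"
    and l: "l < n" and k: "k < n" and ne: "b k \<noteq> b l"
  shows "(\<Sum>i<n. cnj (p i l) * p i k) = 0"
proof -
  define G where "G = (\<Sum>i<n. cnj (p i l) * p i k)"
  have "of_real (b k) * G = (\<Sum>i<n. cnj (p i l) * (\<Sum>j<n. h i j * p j k))"
    using hp k unfolding G_def by (simp add: sum_distrib_left ac_simps)
  also have "\<dots> = (\<Sum>j<n. (\<Sum>i<n. cnj (p i l) * h i j) * p j k)"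
    by (simp add: sum_distrib_left sum_distrib_right mult.assoc) (subst sum.swap, simp)
  also have "\<dots> = (\<Sum>j<n. cnj (\<Sum>i<n. h j i * p i l) * p j k)"
  proof (intro sum.cong refl)
    fix j assume j: "j \<in> {..<n}"
    have "(\<Sum>i<n. cnj (p i l) * h i j) = cnj (\<Sum>i<n. h j i * p i l)"
      using herm j by (simp add: mult.commute)
    thus "(\<Sum>i<n. cnj (p i l) * h i j) * p j k = cnj (\<Sum>i<n. h j i * p i l) * p j k" by simp
  qed
  also have "\<dots> = of_real (b l) * G"
    using hp l unfolding G_def by (simp add: sum_distrib_left ac_simps)
  finally have "(of_real (b k) - of_real (b l)) * G = 0" by (simp add: algebra_simps)
  thus ?thesis using ne unfolding G_def by simp
qed

lemma eigenbasis_expansion: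
  fixes h p q :: "nat \<Rightarrow> nat \<Rightarrow> complex" and b :: "nat \<Rightarrow> real" and x :: "nat \<Rightarrow> complex"
  assumes hp: "\<forall>i<n. \<forall>k<n. (\<Sum>j<n. h i j * p j k) = p i k * of_real (b k)"
    and pq: "\<forall>i<n. \<forall>j<n. (\<Sum>k<n. p i k * q k j) = (if i = j then 1 else 0)"
    and c: "c = (\<lambda>k. \<Sum>j<n. q k j * x j)" and i: "i < n"
  shows "x i = (\<Sum>k<n. p i k * c k)"
    and "(\<Sum>j<n. h i j * x j) = (\<Sum>k<n. p i k * of_real (b k) * c k)"
proof -
  have xc: "x i = (\<Sum>k<n. p i k * c k)" if i: "i < n" for i
  proof -
    have "(\<Sum>k<n. p i k * c k) = (\<Sum>k<n. \<Sum>j<n. p i k * q k j * x j)"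
      unfolding c by (simp add: sum_distrib_left mult.assoc)
    also have "\<dots> = (\<Sum>j<n. (\<Sum>k<n. p i k * q k j) * x j)"
      by (subst sum.swap) (simp add: sum_distrib_right)
    also have "\<dots> = (\<Sum>j<n. if i = j then x j else 0)"
      using pq i by (intro sum.cong refl) auto
    also have "\<dots> = x i" using i by simp
    finally show ?thesis by simp
  qed
  thus "x i = (\<Sum>k<n. p i k * c k)" using i .
  have "(\<Sum>j<n. h i j * x j) = (\<Sum>j<n. h i j * (\<Sum>k<n. p j k * c k))"
    using xc by (intro sum.cong refl) auto
  also have "\<dots> = (\<Sum>k<n. (\<Sum>j<n. h i j * p j k) * c k)"
    by (simp add: sum_distrib_left sum_distrib_right mult.assoc) (subst sum.swap, simp)
  also have "\<dots> = (\<Sum>k<n. p i k * of_real (b k) * c k)"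
    using hp i by (intro sum.cong refl) auto
  finally show "(\<Sum>j<n. h i j * x j) = (\<Sum>k<n. p i k * of_real (b k) * c k)" .
qed

text \<open>The columns of \<open>p\<close> need not be orthonormal, but columns for different eigenvalues
  are orthogonal, which is all the computation needs.\<close>

lemma hermitian_form_eq_sum_squares:
  fixes h p q :: "nat \<Rightarrow> nat \<Rightarrow> complex" and b :: "nat \<Rightarrow> real" and x :: "nat \<Rightarrow> complex"
  assumes herm: "\<forall>i<n. \<forall>j<n. cnj (h i j) = h j i"
    and hp: "\<forall>i<n. \<forall>k<n. (\<Sum>j<n. h i j * p j k) = p i k * of_real (b k)"
    and pq: "\<forall>i<n. \<forall>j<n. (\<Sum>k<n. p i k * q k j) = (if i = j then 1 else 0)"
    and b: "\<forall>k<n. b k \<ge> 0"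
  shows "(\<Sum>i<n. cnj (x i) * (\<Sum>j<n. h i j * x j)) = of_real (\<Sum>i<n. (cmod (\<Sum>k<n. p i k * of_real (sqrt (b k)) * (\<Sum>j<n. q k j * x j)))^2)"
proof -
  define c where "c = (\<lambda>k. \<Sum>j<n. q k j * x j)"
  define G where "G = (\<lambda>l k. \<Sum>i<n. cnj (p i l) * p i k)"
  define sb where "sb = (\<lambda>k. complex_of_real (sqrt (b k)))"
  note exp = eigenbasis_expansion[OF hp pq c_def]
  have bG: "of_real (b k) * G l k = cnj (sb l) * sb k * G l k" if l: "l < n" and k: "k < n" for l k
  proof (cases "b k = b l")
    case True
    moreover have "b k \<ge> 0" using b k by simp
    ultimately have "sqrt (b l) * sqrt (b k) = b k" by simp
    hence "of_real (sqrt (b l)) * of_real (sqrt (b k)) = (of_real (b k)::complex)" by (metis of_real_mult)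
    thus ?thesis by (simp add: sb_def)
  next
    case False thus ?thesis using hermitian_eigvecs_orthogonal[OF herm hp l k] unfolding G_def by simp
  qed
  have "(\<Sum>i<n. cnj (x i) * (\<Sum>j<n. h i j * x j))
      = (\<Sum>i<n. cnj (\<Sum>l<n. p i l * c l) * (\<Sum>k<n. p i k * of_real (b k) * c k))"
    using exp by (intro sum.cong refl) auto
  also have "\<dots> = (\<Sum>i<n. \<Sum>l<n. \<Sum>k<n. cnj (c l) * c k * (of_real (b k) * (cnj (p i l) * p i k)))"
    by (rule sum.cong[OF refl], simp only: cnj_sum sum_distrib_right sum_distrib_left,
      subst sum.swap, intro sum.cong refl, simp add: ac_simps)
  also have "\<dots> = (\<Sum>l<n. \<Sum>k<n. \<Sum>i<n. cnj (c l) * c k * (of_real (b k) * (cnj (p i l) * p i k)))"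
    by (rule sum_swap3)
  also have "\<dots> = (\<Sum>l<n. \<Sum>k<n. cnj (c l) * c k * (of_real (b k) * G l k))"
    unfolding G_def by (simp only: sum_distrib_left)
  also have "\<dots> = (\<Sum>l<n. \<Sum>k<n. cnj (c l) * c k * (cnj (sb l) * sb k * G l k))"
    using bG by (intro sum.cong refl) auto
  also have "\<dots> = (\<Sum>l<n. \<Sum>k<n. \<Sum>i<n. cnj (p i l * sb l * c l) * (p i k * sb k * c k))"
    unfolding G_def sum_distrib_left by (intro sum.cong refl) (simp add: ac_simps)
  also have "\<dots> = (\<Sum>i<n. \<Sum>l<n. \<Sum>k<n. cnj (p i l * sb l * c l) * (p i k * sb k * c k))"
    by (rule sum_swap3[symmetric])
  also have "\<dots> = (\<Sum>i<n. cnj (\<Sum>l<n. p i l * sb l * c l) * (\<Sum>k<n. p i k * sb k * c k))"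
    by (rule sum.cong[OF refl], simp only: cnj_sum sum_distrib_right sum_distrib_left, rule sum.swap)
  also have "\<dots> = (\<Sum>i<n. of_real ((cmod (\<Sum>k<n. p i k * sb k * c k))^2))"
    by (simp only: complex_norm_square) (simp add: ac_simps)
  finally show ?thesis unfolding c_def sb_def by simp
qed

section \<open>Real symmetric matrices\<close>

definition symm :: "nat \<Rightarrow> (nat \<Rightarrow> nat \<Rightarrow> real) \<Rightarrow> bool" where
  "symm n M \<longleftrightarrow> (\<forall>i<n. \<forall>j<n. M i j = M j i)"

definition cmat :: "nat \<Rightarrow> (nat \<Rightarrow> nat \<Rightarrow> real) \<Rightarrow> complex mat" where
  "cmat n M = mat n n (\<lambda>(i,j). complex_of_real (M i j))"

definition qform :: "nat \<Rightarrow> (nat \<Rightarrow> nat \<Rightarrow> real) \<Rightarrow> (nat \<Rightarrow> real) \<Rightarrow> real" where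
  "qform n M x = (\<Sum>i<n. \<Sum>j<n. x i * M i j * x j)"

definition sqnorm :: "nat \<Rightarrow> (nat \<Rightarrow> real) \<Rightarrow> real" where
  "sqnorm n x = (\<Sum>i<n. (x i)^2)"

definition eigvec :: "nat \<Rightarrow> (nat \<Rightarrow> nat \<Rightarrow> real) \<Rightarrow> real \<Rightarrow> (nat \<Rightarrow> real) \<Rightarrow> bool" where
  "eigvec n M e x \<longleftrightarrow> (\<exists>i<n. x i \<noteq> 0) \<and> (\<forall>i<n. (\<Sum>j<n. M i j * x j) = e * x i)"

definition eigendecomp ::
  "nat \<Rightarrow> (nat \<Rightarrow> nat \<Rightarrow> real) \<Rightarrow> (nat \<Rightarrow> nat \<Rightarrow> complex) \<Rightarrow> (nat \<Rightarrow> nat \<Rightarrow> complex) \<Rightarrow> (nat \<Rightarrow> real) \<Rightarrow> bool"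
where
  "eigendecomp n M p q d \<longleftrightarrow>
     (\<forall>i<n. \<forall>k<n. (\<Sum>j<n. complex_of_real (M i j) * p j k) = complex_of_real (d k) * p i k)
   \<and> (\<forall>i<n. \<forall>j<n. (\<Sum>k<n. p i k * q k j) = (if i = j then 1 else 0))
   \<and> (\<forall>i<n. \<forall>j<n. (\<Sum>k<n. q i k * p k j) = (if i = j then 1 else 0))"

lemma symm_eigendecomp:
  assumes "symm n M"
  shows "\<exists>p q d. eigendecomp n M p q d
           \<and> char_poly (cmat n M) = (\<Prod>k\<leftarrow>[0..<n]. [:- complex_of_real (d k), 1:])"
proof -
  define A where "A = cmat n M"
  have A: "A \<in> carrier_mat n n" unfolding A_def cmat_def by auto
  have Aij: "\<And>i j. i < n \<Longrightarrow> j < n \<Longrightarrow> A$$(i,j) = complex_of_real (M i j)"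
    unfolding A_def cmat_def by auto
  have herm: "\<forall>i<n. \<forall>j<n. cnj (A$$(i,j)) = A$$(j,i)" using assms by (simp add: Aij symm_def)
  from hermitian_diagonalization[OF A herm] obtain P Q dd where P: "P \<in> carrier_mat n n" and Q: "Q \<in> carrier_mat n n"
    and PQ: "P * Q = 1\<^sub>m n" and QP: "Q * P = 1\<^sub>m n"
    and AP: "A * P = P * mat n n (\<lambda>(i,j). if i = j then dd i else 0)"
    and cp: "char_poly A = (\<Prod>k\<leftarrow>[0..<n]. [:- dd k, 1:])" by blast
  define p where "p = (\<lambda>i j. P$$(i,j))"
  define q where "q = (\<lambda>i j. Q$$(i,j))"
  have Ap: "(\<Sum>j<n. A$$(i,j) * p j k) = dd k * p i k" if i: "i < n" and k: "k < n" for i k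
  proof -
    define D where "D = mat n n (\<lambda>(i,j). if i = j then dd i else (0::complex))"
    have D: "D \<in> carrier_mat n n" unfolding D_def by auto
    have "(\<Sum>j<n. A$$(i,j) * p j k) = (P * D)$$(i,k)"
      using index_mult_mat_sum[OF A P i k] AP unfolding D_def p_def by simp
    also have "\<dots> = (\<Sum>j<n. if j = k then P$$(i,k) * dd k else 0)"
      unfolding index_mult_mat_sum[OF P D i k] using k by (intro sum.cong refl) (auto simp: D_def)
    finally show ?thesis using k by (simp add: p_def mult.commute)
  qed
  have pq: "(\<Sum>k<n. p i k * q k j) = (if i = j then 1 else 0)" if "i < n" "j < n" for i j
    using index_mult_mat_sum[OF P Q] PQ that unfolding p_def q_def by (metis index_one_mat(1))
  have qp: "(\<Sum>k<n. q i k * p k j) = (if i = j then 1 else 0)" if "i < n" "j < n" for i j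
    using index_mult_mat_sum[OF Q P] QP that unfolding p_def q_def by (metis index_one_mat(1))
  have dd_real: "dd k = complex_of_real (Re (dd k))" if k: "k < n" for k
  proof -
    have "\<exists>i0<n. p i0 k \<noteq> 0"
    proof (rule ccontr)
      assume "\<not> (\<exists>i0<n. p i0 k \<noteq> 0)"
      hence "(\<Sum>i<n. q k i * p i k) = 0" by auto
      with qp[OF k k] show False by simp
    qed
    then obtain i0 where i0: "i0 < n" "p i0 k \<noteq> 0" by blast
    have "\<forall>i<n. (\<Sum>j<n. A$$(i,j) * p j k) = dd k * p i k" using Ap k by auto
    from hermitian_eigenvalue_real[OF herm this i0] have "Im (dd k) = 0" .
    thus ?thesis by (simp add: complex_eq_iff)
  qed
  define d where "d = (\<lambda>k. Re (dd k))"
  have "eigendecomp n M p q d"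
    unfolding eigendecomp_def using pq qp Ap dd_real by (auto simp: Aij d_def)
  moreover have "map (\<lambda>k. [:- dd k, 1:]) [0..<n] = map (\<lambda>k. [:- complex_of_real (d k), 1:]) [0..<n]"
    using dd_real unfolding d_def by (intro map_cong refl) auto
  ultimately show ?thesis using cp unfolding A_def by (metis (no_types, lifting))
qed

lemma eigendecomp_column_nonzero:
  assumes "eigendecomp n M p q d" "k < n"
  shows "\<exists>i<n. p i k \<noteq> 0"
proof (rule ccontr)
  assume "\<not> (\<exists>i<n. p i k \<noteq> 0)"
  hence "(\<Sum>i<n. q k i * p i k) = 0" by auto
  thus False using assms unfolding eigendecomp_def by auto
qed

lemma complex_eigvec_real:
  fixes z :: "nat \<Rightarrow> complex"
  assumes ev: "\<forall>i<n. (\<Sum>j<n. complex_of_real (M i j) * z j) = complex_of_real e * z i"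
    and nz: "i1 < n" "z i1 \<noteq> 0"
  shows "\<exists>x. eigvec n M e x \<and> (\<forall>i. z i = 0 \<longrightarrow> x i = 0)"
proof -
  have re: "\<forall>i<n. (\<Sum>j<n. M i j * Re (z j)) = e * Re (z i)"
  proof (intro allI impI)
    fix i assume i: "i < n"
    have "Re (\<Sum>j<n. complex_of_real (M i j) * z j) = Re (complex_of_real e * z i)" using ev i by simp
    thus "(\<Sum>j<n. M i j * Re (z j)) = e * Re (z i)" by (simp add: Re_sum)
  qed
  have im: "\<forall>i<n. (\<Sum>j<n. M i j * Im (z j)) = e * Im (z i)"
  proof (intro allI impI)
    fix i assume i: "i < n"
    have "Im (\<Sum>j<n. complex_of_real (M i j) * z j) = Im (complex_of_real e * z i)" using ev i by simp
    thus "(\<Sum>j<n. M i j * Im (z j)) = e * Im (z i)" by (simp add: Im_sum)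
  qed
  show ?thesis
  proof (cases "Re (z i1) = 0")
    case True
    hence "Im (z i1) \<noteq> 0" using nz complex_eq_iff by auto
    thus ?thesis using im nz unfolding eigvec_def by (intro exI[of _ "\<lambda>i. Im (z i)"]) auto
  next
    case False
    thus ?thesis using re nz unfolding eigvec_def by (intro exI[of _ "\<lambda>i. Re (z i)"]) auto
  qed
qed

lemma eigendecomp_eigvec:
  assumes "eigendecomp n M p q d" "k < n"
  shows "\<exists>x. eigvec n M (d k) x"
proof -
  from eigendecomp_column_nonzero[OF assms] obtain i1 where i1: "i1 < n" "p i1 k \<noteq> 0" by auto
  have "\<forall>i<n. (\<Sum>j<n. complex_of_real (M i j) * p j k) = complex_of_real (d k) * p i k"
    using assms unfolding eigendecomp_def by auto
  from complex_eigvec_real[OF this i1] show ?thesis by auto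
qed

text \<open>The witness is the combination of the columns \<open>k\<close> and \<open>l\<close> of \<open>p\<close> that vanishes
  at \<open>i0\<close>; it is nonzero because these columns are linearly independent.\<close>

lemma eigendecomp_eigvec_vanishing:
  assumes dec: "eigendecomp n M p q d" and k: "k < n" and l: "l < n" and kl: "k \<noteq> l"
    and dkl: "d k = d l" and i0: "i0 < n"
  shows "\<exists>x. eigvec n M (d k) x \<and> x i0 = 0"
proof (cases "p i0 l = 0 \<and> p i0 k = 0")
  case True
  from eigendecomp_column_nonzero[OF dec k] obtain i1 where i1: "i1 < n" "p i1 k \<noteq> 0" by auto
  have "\<forall>i<n. (\<Sum>j<n. complex_of_real (M i j) * p j k) = complex_of_real (d k) * p i k"
    using dec k unfolding eigendecomp_def by auto
  from complex_eigvec_real[OF this i1] True show ?thesis by auto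
next
  case False
  have Mp: "\<And>i k. i < n \<Longrightarrow> k < n \<Longrightarrow> (\<Sum>j<n. complex_of_real (M i j) * p j k) = complex_of_real (d k) * p i k"
    and qp: "\<And>i j. i < n \<Longrightarrow> j < n \<Longrightarrow> (\<Sum>k<n. q i k * p k j) = (if i = j then 1 else 0)"
    using dec unfolding eigendecomp_def by auto
  define z where "z = (\<lambda>i. p i0 l * p i k - p i0 k * p i l)"
  have ev: "\<forall>i<n. (\<Sum>j<n. complex_of_real (M i j) * z j) = complex_of_real (d k) * z i"
  proof (intro allI impI)
    fix i assume i: "i < n"
    have "(\<Sum>j<n. complex_of_real (M i j) * z j)
       = p i0 l * (\<Sum>j<n. complex_of_real (M i j) * p j k) - p i0 k * (\<Sum>j<n. complex_of_real (M i j) * p j l)"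
      unfolding z_def by (simp add: sum_distrib_left sum_subtractf algebra_simps)
    also have "\<dots> = complex_of_real (d k) * z i" using Mp[OF i k] Mp[OF i l] dkl
      unfolding z_def by (simp add: algebra_simps)
    finally show "(\<Sum>j<n. complex_of_real (M i j) * z j) = complex_of_real (d k) * z i" .
  qed
  have "\<exists>i1<n. z i1 \<noteq> 0"
  proof (rule ccontr)
    assume "\<not> (\<exists>i1<n. z i1 \<noteq> 0)"
    hence z0: "\<And>m. (\<Sum>i<n. q m i * z i) = 0" by simp
    have "\<And>m. (\<Sum>i<n. q m i * z i) = p i0 l * (\<Sum>i<n. q m i * p i k) - p i0 k * (\<Sum>i<n. q m i * p i l)"
      unfolding z_def by (simp add: sum_distrib_left sum_subtractf algebra_simps)
    hence "p i0 l * (\<Sum>i<n. q k i * p i k) - p i0 k * (\<Sum>i<n. q k i * p i l) = 0"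
      "p i0 l * (\<Sum>i<n. q l i * p i k) - p i0 k * (\<Sum>i<n. q l i * p i l) = 0" using z0 by metis+
    hence "p i0 l = 0" "p i0 k = 0" using qp k l kl by auto
    thus False using False by simp
  qed
  then obtain i1 where i1: "i1 < n" "z i1 \<noteq> 0" by auto
  from complex_eigvec_real[OF ev i1] obtain x where "eigvec n M (d k) x" "\<forall>i. z i = 0 \<longrightarrow> x i = 0" by auto
  moreover have "z i0 = 0" unfolding z_def by simp
  ultimately show ?thesis by auto
qed

lemma eigendecomp_shift:
  assumes "eigendecomp n M p q d"
  shows "eigendecomp n (\<lambda>i j. (if i = j then a else 0) + b * M i j) p q (\<lambda>k. a + b * d k)"
proof -
  have "(\<Sum>j<n. complex_of_real ((if i = j then a else 0) + b * M i j) * p j k)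
      = complex_of_real (a + b * d k) * p i k" if i: "i < n" and k: "k < n" for i k
  proof -
    have "(\<Sum>j<n. complex_of_real ((if i = j then a else 0) + b * M i j) * p j k)
        = (\<Sum>j<n. (if i = j then complex_of_real a * p j k else 0)
             + complex_of_real b * (complex_of_real (M i j) * p j k))"
      by (intro sum.cong refl) (auto simp: algebra_simps)
    also have "\<dots> = complex_of_real a * p i k + complex_of_real b * (\<Sum>j<n. complex_of_real (M i j) * p j k)"
      using i by (simp add: sum.distrib sum_distrib_left)
    also have "\<dots> = complex_of_real (a + b * d k) * p i k"
      using assms i k unfolding eigendecomp_def by (simp add: algebra_simps)
    finally show ?thesis .
  qed
  thus ?thesis using assms unfolding eigendecomp_def by blast
qed

lemma qform_shift:
  "qform n (\<lambda>i j. (if i = j then a else 0) + b * M i j) x = a * sqnorm n x + b * qform n M x"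
proof -
  have "qform n (\<lambda>i j. (if i = j then a else 0) + b * M i j) x
      = (\<Sum>i<n. \<Sum>j<n. (if i = j then a * (x i)^2 else 0) + b * (x i * M i j * x j))"
    unfolding qform_def by (intro sum.cong refl) (auto simp: algebra_simps power2_eq_square)
  also have "\<dots> = (\<Sum>i<n. a * (x i)^2) + b * qform n M x"
    unfolding qform_def by (simp add: sum.distrib sum_distrib_left)
  finally show ?thesis unfolding sqnorm_def by (simp add: sum_distrib_left)
qed

lemma eigendecomp_qform_nonneg:
  assumes S: "symm n M" and dec: "eigendecomp n M p q d" and d: "\<forall>k<n. d k \<ge> 0"
  shows "qform n M x \<ge> 0"
proof -
  have "(\<Sum>i<n. cnj (complex_of_real (x i)) * (\<Sum>j<n. complex_of_real (M i j) * complex_of_real (x j)))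
      = of_real (\<Sum>i<n. (cmod (\<Sum>k<n. p i k * of_real (sqrt (d k)) * (\<Sum>j<n. q k j * complex_of_real (x j))))^2)"
    using S dec d unfolding symm_def eigendecomp_def
    by (intro hermitian_form_eq_sum_squares) (auto simp: mult.commute)
  moreover have "(\<Sum>i<n. cnj (complex_of_real (x i)) * (\<Sum>j<n. complex_of_real (M i j) * complex_of_real (x j)))
      = of_real (qform n M x)"
    unfolding qform_def by (simp add: sum_distrib_left ac_simps)
  ultimately show ?thesis by (metis (no_types, lifting) of_real_eq_iff sum_nonneg zero_le_power2)
qed

lemma eigendecomp_qform_le:
  assumes S: "symm n M" and dec: "eigendecomp n M p q d" and d: "\<forall>k<n. d k \<le> \<mu>"
  shows "qform n M x \<le> \<mu> * sqnorm n x"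
proof -
  have "qform n (\<lambda>i j. (if i = j then \<mu> else 0) + (-1) * M i j) x \<ge> 0"
    using eigendecomp_shift[OF dec, of \<mu> "-1"] S d
    by (intro eigendecomp_qform_nonneg) (auto simp: symm_def)
  thus ?thesis unfolding qform_shift by simp
qed

lemma eigendecomp_qform_ge:
  assumes S: "symm n M" and dec: "eigendecomp n M p q d" and d: "\<forall>k<n. \<mu> \<le> d k"
  shows "\<mu> * sqnorm n x \<le> qform n M x"
proof -
  have "qform n (\<lambda>i j. (if i = j then - \<mu> else 0) + 1 * M i j) x \<ge> 0"
    using eigendecomp_shift[OF dec, of "- \<mu>" 1] S d
    by (intro eigendecomp_qform_nonneg) (auto simp: symm_def)
  thus ?thesis unfolding qform_shift by simp
qed

definition spectral_data :: "nat \<Rightarrow> (nat \<Rightarrow> nat \<Rightarrow> real) \<Rightarrow> (nat \<Rightarrow> real) \<Rightarrow> bool" where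
  "spectral_data n M d \<longleftrightarrow> char_poly (cmat n M) = (\<Prod>k\<leftarrow>[0..<n]. [:- complex_of_real (d k), 1:])
     \<and> (\<forall>k<n. \<exists>x. eigvec n M (d k) x)
     \<and> (\<forall>k l i0. k < n \<longrightarrow> l < n \<longrightarrow> k \<noteq> l \<longrightarrow> d k = d l \<longrightarrow> i0 < n \<longrightarrow> (\<exists>x. eigvec n M (d k) x \<and> x i0 = 0))
     \<and> (\<forall>\<mu>. (\<forall>k<n. d k \<le> \<mu>) \<longrightarrow> (\<forall>x. qform n M x \<le> \<mu> * sqnorm n x))
     \<and> (\<forall>\<mu>. (\<forall>k<n. \<mu> \<le> d k) \<longrightarrow> (\<forall>x. \<mu> * sqnorm n x \<le> qform n M x))"

lemma spectral_data_exists: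
  assumes "symm n M"
  shows "\<exists>d. spectral_data n M d"
proof -
  obtain p q d where dec: "eigendecomp n M p q d"
    and cp: "char_poly (cmat n M) = (\<Prod>k\<leftarrow>[0..<n]. [:- complex_of_real (d k), 1:])"
    using symm_eigendecomp[OF assms] by blast
  have "spectral_data n M d"
    unfolding spectral_data_def
    using cp eigendecomp_eigvec[OF dec] eigendecomp_eigvec_vanishing[OF dec]
      eigendecomp_qform_le[OF assms dec] eigendecomp_qform_ge[OF assms dec] by blast
  thus ?thesis by blast
qed

lemma spectral_data_eigvec:
  "spectral_data n M d \<Longrightarrow> k < n \<Longrightarrow> \<exists>x. eigvec n M (d k) x"
  unfolding spectral_data_def by blast

lemma spectral_data_eigvec_vanishing:
  "spectral_data n M d \<Longrightarrow> k < n \<Longrightarrow> l < n \<Longrightarrow> k \<noteq> l \<Longrightarrow> d k = d l \<Longrightarrow> i0 < n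
    \<Longrightarrow> \<exists>x. eigvec n M (d k) x \<and> x i0 = 0"
  unfolding spectral_data_def by blast

lemma spectral_data_qform_le:
  "spectral_data n M d \<Longrightarrow> \<forall>k<n. d k \<le> \<mu> \<Longrightarrow> qform n M x \<le> \<mu> * sqnorm n x"
  unfolding spectral_data_def by blast

lemma spectral_data_qform_ge:
  "spectral_data n M d \<Longrightarrow> \<forall>k<n. \<mu> \<le> d k \<Longrightarrow> \<mu> * sqnorm n x \<le> qform n M x"
  unfolding spectral_data_def by blast

section \<open>Extremal properties of the spectral data\<close>

lemma spectrum_cmat:
  assumes "spectral_data n M d"
  shows "spectrum (cmat n M) = (\<lambda>k. complex_of_real (d k)) ` {..<n}"
proof -
  have A: "cmat n M \<in> carrier_mat n n" unfolding cmat_def by auto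
  have cp: "char_poly (cmat n M) = (\<Prod>k\<leftarrow>[0..<n]. [:- complex_of_real (d k), 1:])"
    using assms unfolding spectral_data_def by auto
  have "spectrum (cmat n M) = {z. poly (char_poly (cmat n M)) z = 0}"
    by (rule spectrum_root_char_poly[OF A])
  also have "\<dots> = {z. \<exists>k<n. z = complex_of_real (d k)}"
    unfolding cp poly_prod_list by (auto simp: prod_list_zero_iff)
  finally show ?thesis by auto
qed

lemma spectral_radius_cmat:
  assumes "spectral_data n M d" "n > 0"
  shows "spectral_radius (cmat n M) = Max ((\<lambda>k. \<bar>d k\<bar>) ` {..<n})"
proof -
  have "norm ` spectrum (cmat n M) = (\<lambda>k. \<bar>d k\<bar>) ` {..<n}"
    unfolding spectrum_cmat[OF assms(1)] by (auto simp: image_image)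
  thus ?thesis unfolding spectral_radius_def by simp
qed

lemma eigenvalues_desc_cmat:
  assumes "spectral_data n M d"
  shows "eigenvalues_desc (cmat n M) = rev (sort (map d [0..<n]))"
proof -
  have cp: "char_poly (cmat n M) = (\<Prod>k\<leftarrow>[0..<n]. [:- complex_of_real (d k), 1:])"
    using assms unfolding spectral_data_def by auto
  have "proots (char_poly (cmat n M)) = sum_list (map proots (map (\<lambda>k. [:- complex_of_real (d k), 1:]) [0..<n]))"
  proof -
    have "0 \<notin> set (map (\<lambda>k. [:- complex_of_real (d k), 1:]) [0..<n])" by auto
    from proots_prod_list[OF this] show ?thesis unfolding cp by simp
  qed
  also have "\<dots> = mset (map (\<lambda>k. complex_of_real (d k)) [0..<n])"
    by (induct n) (auto simp: proots_linear_factor)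
  finally have "image_mset Re (proots (char_poly (cmat n M))) = mset (map d [0..<n])"
    by (simp add: multiset.map_comp o_def)
  thus ?thesis unfolding eigenvalues_desc_def by (simp only: sorted_list_of_multiset_mset)
qed

lemma map_insort_key: "map f (insort_key f x ys) = insort (f x) (map f ys)"
  by (induct ys) auto

lemma sort_map_key: "sort (map f xs) = map f (sort_key f xs)"
  by (induct xs) (auto simp: map_insort_key)

lemma sort_key_upt:
  fixes d :: "nat \<Rightarrow> real" and n :: nat
  defines "P \<equiv> sort_key d [0..<n]"
  shows "length P = n" and "\<And>i. i < n \<Longrightarrow> P ! i < n" and "\<And>k. k < n \<Longrightarrow> \<exists>i<n. P ! i = k"
    and "\<And>i j. i < n \<Longrightarrow> i \<noteq> j \<Longrightarrow> j < n \<Longrightarrow> P ! i \<noteq> P ! j"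
    and "\<And>i j. i \<le> j \<Longrightarrow> j < n \<Longrightarrow> d (P ! i) \<le> d (P ! j)"
proof -
  have set: "set P = {..<n}" and dist: "distinct P" and sorted: "sorted (map d P)"
    unfolding P_def by auto
  show len: "length P = n" unfolding P_def by simp
  show "\<And>i. i < n \<Longrightarrow> P ! i < n" using set len nth_mem by fastforce
  show "\<exists>i<n. P ! i = k" if "k < n" for k
  proof -
    have "k \<in> set P" using set that by simp
    thus ?thesis using len by (auto simp: in_set_conv_nth)
  qed
  show "\<And>i j. i < n \<Longrightarrow> i \<noteq> j \<Longrightarrow> j < n \<Longrightarrow> P ! i \<noteq> P ! j"
    using len by (simp add: nth_eq_iff_index_eq[OF dist])
  show "\<And>i j. i \<le> j \<Longrightarrow> j < n \<Longrightarrow> d (P ! i) \<le> d (P ! j)"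
    using sorted len by (auto simp: sorted_iff_nth_mono)
qed

lemma eigenvalues_desc_second:
  assumes sp: "spectral_data n M d" and n2: "n \<ge> 2"
  shows "\<exists>k1<n. \<exists>k2<n. k1 \<noteq> k2 \<and> (\<forall>k<n. d k \<le> d k1) \<and> eigenvalues_desc (cmat n M) ! 1 = d k2"
proof -
  define P where "P = sort_key d [0..<n]"
  note P = sort_key_upt[where d=d and n=n, folded P_def]
  have "eigenvalues_desc (cmat n M) ! 1 = d (P ! (n - 2))"
    unfolding eigenvalues_desc_cmat[OF sp] sort_map_key P_def[symmetric] using P(1) n2
    by (simp add: rev_nth numeral_2_eq_2)
  moreover have "d k \<le> d (P ! (n - 1))" if k: "k < n" for k
  proof -
    obtain i where "i < n" "P ! i = k" using P(3)[OF k] by blast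
    thus ?thesis using P(5)[of i "n - 1"] n2 by simp
  qed
  moreover have "P ! (n - 1) < n" "P ! (n - 2) < n" "P ! (n - 1) \<noteq> P ! (n - 2)"
    using P(2)[of "n - 1"] P(2)[of "n - 2"] P(4)[of "n - 1" "n - 2"] n2 by auto
  ultimately show ?thesis by blast
qed

lemma eigenvalues_desc_last:
  assumes sp: "spectral_data n M d" and n: "n > 0"
  shows "\<exists>k0<n. (\<forall>k<n. d k0 \<le> d k) \<and> eigenvalues_desc (cmat n M) ! (n - 1) = d k0"
proof -
  define P where "P = sort_key d [0..<n]"
  note P = sort_key_upt[where d=d and n=n, folded P_def]
  have "eigenvalues_desc (cmat n M) ! (n - 1) = d (P ! 0)"
    unfolding eigenvalues_desc_cmat[OF sp] sort_map_key P_def[symmetric] using P(1) n by (simp add: rev_nth)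
  moreover have "d (P ! 0) \<le> d k" if k: "k < n" for k
  proof -
    obtain i where "i < n" "P ! i = k" using P(3)[OF k] by blast
    thus ?thesis using P(5)[of 0 i] by simp
  qed
  ultimately show ?thesis using P(2)[OF n] by auto
qed

lemma sqnorm_nonneg: "sqnorm n x \<ge> 0"
  unfolding sqnorm_def by (simp add: sum_nonneg)

lemma sqnorm_pos: "i < n \<Longrightarrow> x i \<noteq> 0 \<Longrightarrow> sqnorm n x > 0"
proof -
  assume i: "i < n" and x: "x i \<noteq> 0"
  have "(x i)^2 \<le> sqnorm n x" unfolding sqnorm_def using i by (intro member_le_sum) auto
  moreover have "(x i)^2 > 0" using x by simp
  ultimately show ?thesis by linarith
qed

lemma eigvec_qform: "eigvec n M r x \<Longrightarrow> qform n M x = r * sqnorm n x"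
proof -
  assume e: "eigvec n M r x"
  have "qform n M x = (\<Sum>i<n. x i * (\<Sum>j<n. M i j * x j))"
    unfolding qform_def by (simp add: sum_distrib_left ac_simps)
  also have "\<dots> = (\<Sum>i<n. x i * (r * x i))" using e unfolding eigvec_def by (intro sum.cong refl) auto
  also have "\<dots> = r * sqnorm n x" unfolding sqnorm_def by (simp add: sum_distrib_left power2_eq_square ac_simps)
  finally show ?thesis .
qed

lemma qform_add:
  assumes "symm n M"
  shows "qform n M (\<lambda>i. a i + t * b i) = qform n M a + 2 * t * (\<Sum>i<n. b i * (\<Sum>j<n. M i j * a j)) + t^2 * qform n M b"
proof -
  have S: "\<And>i j. i < n \<Longrightarrow> j < n \<Longrightarrow> M i j = M j i" using assms unfolding symm_def by auto
  have "qform n M (\<lambda>i. a i + t * b i) = (\<Sum>i<n. \<Sum>j<n. a i * M i j * a j + t * (a i * M i j * b j) + t * (b i * M i j * a j) + t^2 * (b i * M i j * b j))"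
    unfolding qform_def by (intro sum.cong refl) (simp add: algebra_simps power2_eq_square)
  also have "\<dots> = qform n M a + t * (\<Sum>i<n. \<Sum>j<n. a i * M i j * b j) + t * (\<Sum>i<n. \<Sum>j<n. b i * M i j * a j) + t^2 * qform n M b"
    unfolding qform_def by (simp add: sum.distrib sum_distrib_left)
  also have "(\<Sum>i<n. \<Sum>j<n. a i * M i j * b j) = (\<Sum>i<n. \<Sum>j<n. b i * M i j * a j)"
    by (subst sum.swap) (intro sum.cong refl, auto simp: S ac_simps)
  also have "(\<Sum>i<n. \<Sum>j<n. b i * M i j * a j) = (\<Sum>i<n. b i * (\<Sum>j<n. M i j * a j))"
    by (simp add: sum_distrib_left ac_simps)
  finally show ?thesis by simp
qed

lemma sqnorm_add: "sqnorm n (\<lambda>i. a i + t * b i) = sqnorm n a + 2 * t * (\<Sum>i<n. b i * a i) + t^2 * sqnorm n b"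
  unfolding sqnorm_def by (simp add: sum.distrib sum_distrib_left power2_eq_square algebra_simps)

lemma qform_scale: "qform n M (\<lambda>i. c * x i) = c^2 * qform n M x"
  unfolding qform_def by (simp add: sum_distrib_left power2_eq_square ac_simps)

lemma sqnorm_scale: "sqnorm n (\<lambda>i. c * x i) = c^2 * sqnorm n x"
  unfolding sqnorm_def by (simp add: sum_distrib_left power_mult_distrib)

lemma qform_cong: "(\<forall>i<n. \<forall>j<n. M i j = M' i j) \<Longrightarrow> qform n M y = qform n M' y"
  unfolding qform_def by (intro sum.cong refl) auto

lemma abs_qform_le:
  assumes "\<forall>i<n. \<forall>j<n. A i j \<ge> 0"
  shows "\<bar>qform n A x\<bar> \<le> qform n A (\<lambda>i. \<bar>x i\<bar>)"
proof -
  have "\<bar>qform n A x\<bar> \<le> (\<Sum>i<n. \<bar>\<Sum>j<n. x i * A i j * x j\<bar>)" unfolding qform_def by (rule sum_abs)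
  also have "\<dots> \<le> (\<Sum>i<n. \<Sum>j<n. \<bar>x i * A i j * x j\<bar>)" by (intro sum_mono sum_abs)
  also have "\<dots> = qform n A (\<lambda>i. \<bar>x i\<bar>)" unfolding qform_def using assms
    by (intro sum.cong refl) (auto simp: abs_mult)
  finally show ?thesis .
qed

text \<open>Moving \<open>z\<close> by \<open>t\<close> times the residual \<open>v = M z - \<mu> z\<close> raises \<open>x\<^sup>T M x - \<mu> \<bar>x\<bar>\<^sup>2\<close>
  by \<open>2 t \<bar>v\<bar>\<^sup>2 + O(t\<^sup>2)\<close>, which must stay \<open>\<le> 0\<close>.\<close>

lemma qform_eq_bound_imp_eigvec:
  assumes S: "symm n M" and ub: "\<forall>x. qform n M x \<le> \<mu> * sqnorm n x" and eq: "qform n M z = \<mu> * sqnorm n z"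
  shows "\<forall>i<n. (\<Sum>j<n. M i j * z j) = \<mu> * z i"
proof -
  define v where "v = (\<lambda>i. (\<Sum>j<n. M i j * z j) - \<mu> * z i)"
  define R where "R = sqnorm n v"
  define s where "s = qform n M v - \<mu> * sqnorm n v"
  have key: "\<And>t. qform n M (\<lambda>i. z i + t * v i) - \<mu> * sqnorm n (\<lambda>i. z i + t * v i) = 2 * t * R + t^2 * s"
  proof -
    fix t
    have "(\<Sum>i<n. v i * (\<Sum>j<n. M i j * z j)) - \<mu> * (\<Sum>i<n. v i * z i) = R"
      unfolding R_def sqnorm_def v_def by (simp add: sum_distrib_left sum_subtractf[symmetric] power2_eq_square algebra_simps)
    thus "?thesis t" unfolding qform_add[OF S] sqnorm_add s_def using eq by (simp add: algebra_simps)
  qed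
  have R0: "R \<ge> 0" unfolding R_def sqnorm_def by (simp add: sum_nonneg)
  have "R = 0"
  proof (rule ccontr)
    assume "R \<noteq> 0"
    with R0 have Rp: "R > 0" by simp
    define t where "t = R / (\<bar>s\<bar> + 1)"
    have tp: "t > 0" unfolding t_def using Rp by auto
    have "2 * t * R + t^2 * s \<le> 0" using key[of t] ub by (smt (verit))
    hence "t * (2 * R + t * s) \<le> 0" by (simp add: algebra_simps power2_eq_square)
    hence "2 * R + t * s \<le> 0" using tp by (simp add: mult_le_0_iff)
    moreover have "t * \<bar>s\<bar> \<le> R"
    proof -
      have "t * \<bar>s\<bar> = R * (\<bar>s\<bar> / (\<bar>s\<bar> + 1))" unfolding t_def by simp
      also have "\<dots> \<le> R * 1" using Rp by (intro mult_left_mono) auto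
      finally show ?thesis by simp
    qed
    moreover have "t * s \<ge> - (t * \<bar>s\<bar>)" using tp by (simp add: abs_if mult_le_0_iff)
    ultimately show False using Rp by linarith
  qed
  hence "\<forall>i<n. (v i)^2 = 0" unfolding R_def sqnorm_def by (subst (asm) sum_nonneg_eq_0_iff) auto
  thus ?thesis unfolding v_def by auto
qed

lemma spectral_data_abs_le_radius:
  assumes "spectral_data n M d" "k < n"
  shows "\<bar>d k\<bar> \<le> spectral_radius (cmat n M)"
proof -
  have n: "n > 0" using assms(2) by auto
  show ?thesis unfolding spectral_radius_cmat[OF assms(1) n] using assms(2) by (intro Max_ge) auto
qed

lemma spectral_data_qform_le_radius:
  assumes "spectral_data n M d"
  shows "qform n M y \<le> spectral_radius (cmat n M) * sqnorm n y"
  using spectral_data_abs_le_radius[OF assms]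
  by (intro spectral_data_qform_le[OF assms]) (metis abs_ge_self order_trans)

lemma spectral_data_neg_radius_le_qform:
  assumes "spectral_data n M d"
  shows "- spectral_radius (cmat n M) * sqnorm n y \<le> qform n M y"
  using spectral_data_abs_le_radius[OF assms]
  by (intro spectral_data_qform_ge[OF assms]) (metis abs_le_D2 minus_le_iff)

lemma abs_qform_le_spectral_radius:
  assumes "spectral_data n M d"
  shows "\<bar>qform n M x\<bar> \<le> spectral_radius (cmat n M) * sqnorm n x"
  using spectral_data_qform_le_radius[OF assms, of x] spectral_data_neg_radius_le_qform[OF assms, of x]
  by linarith

lemma spectral_data_radius_eigvec:
  assumes "spectral_data n M d" "n > 0"
  shows "\<exists>x r. eigvec n M r x \<and> \<bar>r\<bar> = spectral_radius (cmat n M)"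
proof -
  have "spectral_radius (cmat n M) \<in> (\<lambda>k. \<bar>d k\<bar>) ` {..<n}"
    unfolding spectral_radius_cmat[OF assms] using assms(2) by (intro Max_in) auto
  then obtain k where k: "k < n" "spectral_radius (cmat n M) = \<bar>d k\<bar>" by auto
  with spectral_data_eigvec[OF assms(1)] show ?thesis by metis
qed

lemma le_spectral_radius_of_qform_ge:
  assumes "spectral_data n M d" "c * sqnorm n x \<le> qform n M x" "sqnorm n x > 0"
  shows "c \<le> spectral_radius (cmat n M)"
proof -
  have "c * sqnorm n x \<le> spectral_radius (cmat n M) * sqnorm n x"
    using assms(2) spectral_data_qform_le_radius[OF assms(1), of x] by linarith
  thus ?thesis using assms(3) by simp
qed

lemma less_spectral_radius_of_qform_gt:
  assumes "spectral_data n M d" "c * sqnorm n x < qform n M x" "sqnorm n x > 0"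
  shows "c < spectral_radius (cmat n M)"
proof -
  have "c * sqnorm n x < spectral_radius (cmat n M) * sqnorm n x"
    using assms(2) spectral_data_qform_le_radius[OF assms(1), of x] by linarith
  thus ?thesis using assms(3) by simp
qed

section \<open>Deleting an entry or a row and column\<close>

definition del_entry :: "(nat \<Rightarrow> nat \<Rightarrow> real) \<Rightarrow> nat \<Rightarrow> nat \<Rightarrow> nat \<Rightarrow> nat \<Rightarrow> real" where
  "del_entry M p q = (\<lambda>i j. if (i = p \<and> j = q) \<or> (i = q \<and> j = p) then 0 else M i j)"

lemma double_sum_delta: "p < (n::nat) \<Longrightarrow> q < n \<Longrightarrow> (\<Sum>i<n. \<Sum>j<n. if i = p then (if j = q then c else 0) else 0) = (c::real)"
proof -
  assume p: "p < n" and q: "q < n"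
  have "(\<Sum>i<n. \<Sum>j<n. if i = p then (if j = q then c else 0) else 0) = (\<Sum>i<n. if i = p then c else 0)"
  proof (intro sum.cong refl)
    fix i
    show "(\<Sum>j<n. if i = p then (if j = q then c else 0) else 0) = (if i = p then c else 0)"
      using q by (cases "i = p") (simp_all add: sum.delta)
  qed
  also have "\<dots> = c" using p by simp
  finally show ?thesis .
qed

lemma qform_del_entry:
  assumes "p < n" "q < n" "p \<noteq> q"
  shows "qform n (del_entry M p q) y = qform n M y - y p * M p q * y q - y q * M q p * y p"
proof -
  have "qform n (del_entry M p q) y = (\<Sum>i<n. \<Sum>j<n. y i * M i j * y j
      - ((if i = p then (if j = q then y p * M p q * y q else 0) else 0)
       + (if i = q then (if j = p then y q * M q p * y p else 0) else 0)))"
    unfolding qform_def del_entry_def using assms by (intro sum.cong refl) auto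
  also have "\<dots> = qform n M y - y p * M p q * y q - y q * M q p * y p"
    unfolding qform_def using assms by (simp only: sum_subtractf sum.distrib double_sum_delta)
  finally show ?thesis .
qed

lemma symm_del_entry: "symm n M \<Longrightarrow> symm n (del_entry M p q)"
  unfolding symm_def del_entry_def by auto

definition skip :: "nat \<Rightarrow> nat \<Rightarrow> nat" where "skip v i = (if i < v then i else Suc i)"

definition del_row_col :: "(nat \<Rightarrow> nat \<Rightarrow> real) \<Rightarrow> nat \<Rightarrow> nat \<Rightarrow> nat \<Rightarrow> real" where
  "del_row_col M v = (\<lambda>i j. M (skip v i) (skip v j))"

definition zero_ext :: "nat \<Rightarrow> (nat \<Rightarrow> real) \<Rightarrow> nat \<Rightarrow> real" where
  "zero_ext v y = (\<lambda>i. if i < v then y i else if i = v then 0 else y (i - 1))"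

lemma zero_ext_skip[simp]: "zero_ext v y (skip v i) = y i"
  unfolding zero_ext_def skip_def by auto

lemma zero_ext_same[simp]: "zero_ext v y v = 0"
  unfolding zero_ext_def by auto

lemma bij_skip: assumes "v < n" shows "bij_betw (skip v) {..<n-1} ({..<n} - {v})"
proof (rule bij_betwI[where g = "\<lambda>j. if j < v then j else j - 1"])
  show "skip v \<in> {..<n - 1} \<rightarrow> {..<n} - {v}" using assms unfolding skip_def by (auto split: if_splits)
  show "(\<lambda>j. if j < v then j else j - 1) \<in> {..<n} - {v} \<rightarrow> {..<n - 1}" using assms by (auto split: if_splits)
  show "\<And>x. x \<in> {..<n - 1} \<Longrightarrow> (if skip v x < v then skip v x else skip v x - 1) = x"
    unfolding skip_def by auto
  show "\<And>y. y \<in> {..<n} - {v} \<Longrightarrow> skip v (if y < v then y else y - 1) = y"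
    unfolding skip_def by auto
qed

lemma sum_skip: assumes "v < n" shows "(\<Sum>i<n-1. f (skip v i)) = (\<Sum>i<n. f i) - (f v :: real)"
proof -
  have "(\<Sum>i<n-1. f (skip v i)) = (\<Sum>i\<in>{..<n} - {v}. f i)"
    using sum.reindex_bij_betw[OF bij_skip[OF assms], of f] by simp
  also have "\<dots> = (\<Sum>i<n. f i) - f v" using assms by (simp add: sum_diff1)
  finally show ?thesis .
qed

lemma qform_del_row_col:
  assumes "v < n" "z v = 0"
  shows "qform (n-1) (del_row_col M v) (\<lambda>i. z (skip v i)) = qform n M z"
proof -
  have "qform (n-1) (del_row_col M v) (\<lambda>i. z (skip v i)) = (\<Sum>i<n-1. \<Sum>j<n. z (skip v i) * M (skip v i) j * z j)"
    unfolding qform_def del_row_col_def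
  proof (rule sum.cong[OF refl])
    fix i
    show "(\<Sum>j<n-1. z (skip v i) * M (skip v i) (skip v j) * z (skip v j)) = (\<Sum>j<n. z (skip v i) * M (skip v i) j * z j)"
      using sum_skip[OF assms(1), of "\<lambda>j. z (skip v i) * M (skip v i) j * z j"] assms(2) by simp
  qed
  also have "\<dots> = qform n M z"
    unfolding qform_def using sum_skip[OF assms(1), of "\<lambda>i. \<Sum>j<n. z i * M i j * z j"] assms(2) by simp
  finally show ?thesis .
qed

lemma sqnorm_del_row_col:
  assumes "v < n" "z v = 0"
  shows "sqnorm (n-1) (\<lambda>i. z (skip v i)) = sqnorm n z"
  unfolding sqnorm_def using sum_skip[OF assms(1), of "\<lambda>i. (z i)^2"] assms(2) by simp

lemma symm_del_row_col: "symm n M \<Longrightarrow> v < n \<Longrightarrow> symm (n-1) (del_row_col M v)"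
  unfolding symm_def del_row_col_def skip_def by auto

section \<open>Matrices with connected support\<close>

definition connected_support :: "nat \<Rightarrow> (nat \<Rightarrow> nat \<Rightarrow> real) \<Rightarrow> bool" where
  "connected_support n A \<longleftrightarrow> (\<forall>S. S \<subseteq> {..<n} \<longrightarrow> S \<noteq> {} \<longrightarrow> (\<forall>i\<in>S. \<forall>j<n. A i j \<noteq> 0 \<longrightarrow> j \<in> S) \<longrightarrow> {..<n} \<subseteq> S)"

lemma connected_support_exit:
  assumes "connected_support n A" "S \<subseteq> {..<n}" "i0 \<in> S" "i1 < n" "i1 \<notin> S"
  shows "\<exists>p\<in>S. \<exists>q<n. A p q \<noteq> 0 \<and> q \<notin> S"
  using assms unfolding connected_support_def by blast

lemma connected_support_cong: "(\<forall>i<n. \<forall>j<n. M i j = M' i j) \<Longrightarrow> connected_support n M \<Longrightarrow> connected_support n M'"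
  unfolding connected_support_def by (metis lessThan_iff subsetD)

text \<open>The terms \<open>T i j\<close> are the defects of the triangle inequality in
  \<open>\<bar>x\<^sup>T B x\<bar> \<le> \<bar>x\<bar>\<^sup>T \<bar>B\<bar> \<bar>x\<bar>\<close>. An entry of the wrong sign contributes its defect twice, and
  deleting it from \<open>\<bar>B\<bar>\<close> would push the form of \<open>\<bar>x\<bar>\<close> above the assumed bound.\<close>

lemma signed_eigvec_edge_signs:
  fixes B :: "nat \<Rightarrow> nat \<Rightarrow> real"
  assumes S: "symm n B" and dg: "\<forall>i<n. B i i = 0" and ev: "eigvec n B r x"
    and s: "\<bar>s\<bar> = 1" "s * r = \<bar>r\<bar>"
    and H: "\<forall>p<n. \<forall>q<n. B p q \<noteq> 0 \<longrightarrow> (\<forall>y. qform n (del_entry (\<lambda>i j. \<bar>B i j\<bar>) p q) y \<le> \<bar>r\<bar> * sqnorm n y)"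
  shows "\<forall>p<n. \<forall>q<n. 0 \<le> s * (x p * B p q * x q)"
proof (intro allI impI)
  fix p q assume p: "p < n" and q: "q < n"
  show "0 \<le> s * (x p * B p q * x q)"
  proof (rule ccontr)
    assume neg: "\<not> 0 \<le> s * (x p * B p q * x q)"
    define A where "A = (\<lambda>i j. \<bar>B i j\<bar>)"
    define y where "y = (\<lambda>i. \<bar>x i\<bar>)"
    define T where "T = (\<lambda>i j. y i * A i j * y j - s * (x i * B i j * x j))"
    define w where "w = s * (x p * B p q * x q)"
    have Bsym: "B q p = B p q" using S p q unfolding symm_def by auto
    have absT: "y i * A i j * y j = \<bar>s * (x i * B i j * x j)\<bar>" for i j
      unfolding y_def A_def using s by (simp add: abs_mult)
    have Tnn: "T i j \<ge> 0" for i j using absT[of i j] unfolding T_def by linarith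
    have wn: "w < 0" using neg unfolding w_def by simp
    hence b: "B p q \<noteq> 0" unfolding w_def by auto
    have pq: "p \<noteq> q" using dg b p by auto
    have yw: "y p * A p q * y q = - w" "y q * A q p * y p = - w"
      using absT[of p q] absT[of q p] wn Bsym unfolding w_def by (simp_all add: ac_simps)
    have Tpq: "T p q = -2 * w" "T q p = -2 * w"
      using yw Bsym unfolding T_def w_def by (simp_all add: ac_simps)
    have "(\<Sum>i<n. \<Sum>j<n. T i j) = qform n A y - s * qform n B x"
      unfolding T_def qform_def by (simp add: sum_subtractf sum_distrib_left)
    also have "\<dots> = qform n A y - \<bar>r\<bar> * sqnorm n y"
      using eigvec_qform[OF ev] s unfolding y_def sqnorm_def by (simp add: mult.assoc[symmetric])
    finally have D: "(\<Sum>i<n. \<Sum>j<n. T i j) = qform n A y - \<bar>r\<bar> * sqnorm n y" .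
    have "-4 * w = (\<Sum>i<n. (if i = p then T p q else 0) + (if i = q then T q p else 0))"
      using p q Tpq by (simp add: sum.distrib)
    also have "\<dots> \<le> (\<Sum>i<n. \<Sum>j<n. T i j)"
    proof (rule sum_mono)
      fix i assume i: "i \<in> {..<n}"
      show "(if i = p then T p q else 0) + (if i = q then T q p else 0) \<le> (\<Sum>j<n. T i j)"
        using p q i pq Tnn by (auto intro!: member_le_sum sum_nonneg)
    qed
    finally have "qform n A y - \<bar>r\<bar> * sqnorm n y \<ge> -4 * w" using D by simp
    hence "qform n (del_entry A p q) y \<ge> \<bar>r\<bar> * sqnorm n y - 2 * w"
      using qform_del_entry[OF p q pq, of A y] yw by simp
    moreover have "qform n (del_entry A p q) y \<le> \<bar>r\<bar> * sqnorm n y" using H p q b unfolding A_def by blast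
    ultimately show False using wn by simp
  qed
qed

lemma signed_eigvec_abs_qform:
  fixes B :: "nat \<Rightarrow> nat \<Rightarrow> real"
  assumes ev: "eigvec n B r x" and s: "\<bar>s\<bar> = 1" "s * r = \<bar>r\<bar>"
    and signs: "\<forall>p<n. \<forall>q<n. 0 \<le> s * (x p * B p q * x q)"
  shows "qform n (\<lambda>i j. \<bar>B i j\<bar>) (\<lambda>i. \<bar>x i\<bar>) = \<bar>r\<bar> * sqnorm n (\<lambda>i. \<bar>x i\<bar>)"
proof -
  have "\<bar>x i\<bar> * \<bar>B i j\<bar> * \<bar>x j\<bar> = s * (x i * B i j * x j)" if "i < n" "j < n" for i j
  proof -
    have "\<bar>x i\<bar> * \<bar>B i j\<bar> * \<bar>x j\<bar> = \<bar>s * (x i * B i j * x j)\<bar>" using s by (simp add: abs_mult)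
    also have "\<dots> = s * (x i * B i j * x j)" using signs that by simp
    finally show ?thesis .
  qed
  hence "qform n (\<lambda>i j. \<bar>B i j\<bar>) (\<lambda>i. \<bar>x i\<bar>) = (\<Sum>i<n. \<Sum>j<n. s * (x i * B i j * x j))"
    unfolding qform_def by (intro sum.cong refl) auto
  also have "\<dots> = s * qform n B x" unfolding qform_def by (simp add: sum_distrib_left)
  also have "\<dots> = \<bar>r\<bar> * sqnorm n (\<lambda>i. \<bar>x i\<bar>)"
    using eigvec_qform[OF ev] s unfolding sqnorm_def by simp
  finally show ?thesis .
qed

text \<open>At a zero \<open>p\<close> of \<open>x\<close> next to a nonzero \<open>q\<close>, deleting the entry \<open>pq\<close> does not change
  the form of \<open>\<bar>x\<bar>\<close>, so \<open>\<bar>x\<bar>\<close> is an eigenvector of the deleted matrix; its row \<open>p\<close> then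
  forces \<open>(B x) p = B p q * x q \<noteq> 0\<close>.\<close>

lemma signed_eigvec_nowhere_zero:
  fixes B :: "nat \<Rightarrow> nat \<Rightarrow> real"
  assumes S: "symm n B" and dg: "\<forall>i<n. B i i = 0"
    and cn: "connected_support n (\<lambda>i j. \<bar>B i j\<bar>)" and ev: "eigvec n B r x"
    and H: "\<forall>p<n. \<forall>q<n. B p q \<noteq> 0 \<longrightarrow> (\<forall>y. qform n (del_entry (\<lambda>i j. \<bar>B i j\<bar>) p q) y \<le> \<bar>r\<bar> * sqnorm n y)"
  shows "\<forall>i<n. x i \<noteq> 0"
proof (rule ccontr)
  assume "\<not> (\<forall>i<n. x i \<noteq> 0)"
  then obtain i0 where i0: "i0 < n" "x i0 = 0" by auto
  from ev obtain i1 where i1: "i1 < n" "x i1 \<noteq> 0" unfolding eigvec_def by auto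
  define A where "A = (\<lambda>i j. \<bar>B i j\<bar>)"
  define y where "y = (\<lambda>i. \<bar>x i\<bar>)"
  define s :: real where "s = (if r \<ge> 0 then 1 else -1)"
  have s: "\<bar>s\<bar> = 1" "s * r = \<bar>r\<bar>" unfolding s_def by auto
  have qAy: "qform n A y = \<bar>r\<bar> * sqnorm n y"
    unfolding A_def y_def by (rule signed_eigvec_abs_qform[OF ev s signed_eigvec_edge_signs[OF S dg ev s H]])
  define Z where "Z = {i. i < n \<and> x i = 0}"
  have "\<exists>p\<in>Z. \<exists>q<n. A p q \<noteq> 0 \<and> q \<notin> Z"
    by (rule connected_support_exit[OF cn[folded A_def], of Z i0 i1]) (use i0 i1 in \<open>auto simp: Z_def\<close>)
  then obtain p q where p: "p < n" "x p = 0" and q: "q < n" "A p q \<noteq> 0" "x q \<noteq> 0"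
    unfolding Z_def by auto
  have b: "B p q \<noteq> 0" using q unfolding A_def by simp
  have pq: "p \<noteq> q" using p q by auto
  have yp: "y p = 0" using p unfolding y_def by simp
  have ub: "\<forall>z. qform n (del_entry A p q) z \<le> \<bar>r\<bar> * sqnorm n z"
    using H p q b unfolding A_def by blast
  moreover have "qform n (del_entry A p q) y = \<bar>r\<bar> * sqnorm n y"
    using qform_del_entry[OF p(1) q(1) pq, of A y] qAy yp by simp
  moreover have "symm n (del_entry A p q)"
    using S unfolding A_def by (intro symm_del_entry) (auto simp: symm_def)
  ultimately have "\<forall>i<n. (\<Sum>j<n. del_entry A p q i j * y j) = \<bar>r\<bar> * y i"
    using qform_eq_bound_imp_eigvec by blast
  hence "(\<Sum>j<n. del_entry A p q p j * y j) = 0" using p yp by simp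
  hence zero: "\<forall>j\<in>{..<n}. del_entry A p q p j * y j = 0"
    by (subst (asm) sum_nonneg_eq_0_iff) (auto simp: del_entry_def A_def y_def)
  have "B p j * x j = 0" if "j < n" "j \<noteq> q" for j
  proof -
    have "\<bar>B p j * x j\<bar> = del_entry A p q p j * y j"
      using that pq unfolding del_entry_def A_def y_def by (simp add: abs_mult)
    thus ?thesis using zero that(1) by simp
  qed
  hence "(\<Sum>j<n. B p j * x j) = B p q * x q"
    using q(1) by (subst sum.mono_neutral_right[of "{..<n}" "{q}"]) auto
  moreover have "(\<Sum>j<n. B p j * x j) = r * x p" using ev p unfolding eigvec_def by auto
  ultimately have "B p q * x q = 0" using p by simp
  thus False using b q by simp
qed

lemma signed_eigvec_edge_signs_strict:
  fixes B :: "nat \<Rightarrow> nat \<Rightarrow> real"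
  assumes S: "symm n B" and dg: "\<forall>i<n. B i i = 0"
    and cn: "connected_support n (\<lambda>i j. \<bar>B i j\<bar>)" and ev: "eigvec n B r x"
    and s: "\<bar>s\<bar> = 1" "s * r = \<bar>r\<bar>"
    and H: "\<forall>p<n. \<forall>q<n. B p q \<noteq> 0 \<longrightarrow> (\<forall>y. qform n (del_entry (\<lambda>i j. \<bar>B i j\<bar>) p q) y \<le> \<bar>r\<bar> * sqnorm n y)"
  shows "\<forall>i<n. \<forall>j<n. B i j \<noteq> 0 \<longrightarrow> 0 < s * (x i * B i j * x j)"
proof (intro allI impI)
  fix i j assume i: "i < n" and j: "j < n" and b: "B i j \<noteq> 0"
  have "s \<noteq> 0" "x i \<noteq> 0" "x j \<noteq> 0"
    using s(1) signed_eigvec_nowhere_zero[OF S dg cn ev H] i j by auto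
  with b have "s * (x i * B i j * x j) \<noteq> 0" by simp
  moreover have "0 \<le> s * (x i * B i j * x j)" using signed_eigvec_edge_signs[OF S dg ev s H] i j by blast
  ultimately show "0 < s * (x i * B i j * x j)" by linarith
qed

lemma eigvec_abs:
  assumes S: "symm n A" and nn: "\<forall>i<n. \<forall>j<n. A i j \<ge> 0"
    and ub: "\<forall>y. qform n A y \<le> \<theta> * sqnorm n y" and ev: "eigvec n A r x" and r: "\<theta> \<le> \<bar>r\<bar>"
  shows "eigvec n A \<theta> (\<lambda>i. \<bar>x i\<bar>)"
proof -
  define y where "y = (\<lambda>i. \<bar>x i\<bar>)"
  have sq: "sqnorm n y = sqnorm n x" unfolding y_def sqnorm_def by simp
  have "\<theta> * sqnorm n x \<le> \<bar>r\<bar> * sqnorm n x" using r sqnorm_nonneg[of n x] by (rule mult_right_mono)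
  also have "\<dots> = \<bar>qform n A x\<bar>" using eigvec_qform[OF ev] sqnorm_nonneg[of n x] by (simp add: abs_mult)
  also have "\<dots> \<le> qform n A y" unfolding y_def by (rule abs_qform_le[OF nn])
  finally have "\<theta> * sqnorm n y \<le> qform n A y" using sq by simp
  hence "qform n A y = \<theta> * sqnorm n y" using ub[rule_format, of y] by linarith
  from qform_eq_bound_imp_eigvec[OF S ub this] show ?thesis
    using ev unfolding eigvec_def y_def by auto
qed

lemma nonneg_eigvec_nowhere_zero:
  assumes nn: "\<forall>i<n. \<forall>j<n. A i j \<ge> 0" and cn: "connected_support n A"
    and ev: "eigvec n A \<theta> y" and y: "\<forall>i. y i \<ge> 0"
  shows "\<forall>i<n. y i \<noteq> 0"
proof (rule ccontr)
  assume "\<not> (\<forall>i<n. y i \<noteq> 0)"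
  then obtain i0 where i0: "i0 < n" "y i0 = 0" by auto
  from ev obtain i1 where i1: "i1 < n" "y i1 \<noteq> 0" unfolding eigvec_def by auto
  define Z where "Z = {i. i < n \<and> y i = 0}"
  have "\<exists>p\<in>Z. \<exists>q<n. A p q \<noteq> 0 \<and> q \<notin> Z"
    by (rule connected_support_exit[OF cn, of Z i0 i1]) (use i0 i1 in \<open>auto simp: Z_def\<close>)
  then obtain p q where p: "p < n" "y p = 0" and q: "q < n" "A p q \<noteq> 0" "y q \<noteq> 0"
    unfolding Z_def by auto
  have "(\<Sum>j<n. A p j * y j) = 0" using ev p unfolding eigvec_def by simp
  hence "A p q * y q = 0" using nn p q y by (subst (asm) sum_nonneg_eq_0_iff) auto
  thus False using q by simp
qed

lemma perron_eigvec_nowhere_zero: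
  assumes S: "symm n A" and nn: "\<forall>i<n. \<forall>j<n. A i j \<ge> 0" and cn: "connected_support n A"
    and ub: "\<forall>y. qform n A y \<le> \<theta> * sqnorm n y" and ev: "eigvec n A \<theta> x"
  shows "\<forall>i<n. x i \<noteq> 0"
  using nonneg_eigvec_nowhere_zero[OF nn cn eigvec_abs[OF S nn ub ev]] by auto

lemma perron_nonneg_eigvec:
  assumes S: "symm n A" and nn: "\<forall>i<n. \<forall>j<n. A i j \<ge> 0" and sp: "spectral_data n A d" and n: "n > 0"
  shows "\<exists>y. eigvec n A (spectral_radius (cmat n A)) y \<and> (\<forall>i. y i \<ge> 0)"
proof -
  from spectral_data_radius_eigvec[OF sp n] obtain x r
    where "eigvec n A r x" "\<bar>r\<bar> = spectral_radius (cmat n A)" by auto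
  with eigvec_abs[OF S nn allI[OF spectral_data_qform_le_radius[OF sp]]] show ?thesis by fastforce
qed

lemma eigvec_orthogonal:
  assumes S: "symm n A" and x: "eigvec n A l1 x" and y: "eigvec n A l2 y" and ne: "l1 \<noteq> l2"
  shows "(\<Sum>i<n. y i * x i) = 0"
proof -
  have Asym: "\<And>i j. i < n \<Longrightarrow> j < n \<Longrightarrow> A i j = A j i" using S unfolding symm_def by auto
  have "l1 * (\<Sum>i<n. y i * x i) = (\<Sum>i<n. y i * (\<Sum>j<n. A i j * x j))"
    using x unfolding eigvec_def by (simp add: sum_distrib_left ac_simps)
  also have "\<dots> = (\<Sum>j<n. (\<Sum>i<n. A j i * y i) * x j)"
    by (simp add: sum_distrib_left sum_distrib_right ac_simps Asym) (subst sum.swap, simp add: Asym ac_simps)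
  also have "\<dots> = l2 * (\<Sum>i<n. y i * x i)"
    using y unfolding eigvec_def by (simp add: sum_distrib_left ac_simps)
  finally have "(l1 - l2) * (\<Sum>i<n. y i * x i) = 0" by (simp add: algebra_simps)
  thus ?thesis using ne by simp
qed

lemma orthogonal_eigvec_combination:
  assumes S: "symm n A" and x: "eigvec n A l1 x" and y: "eigvec n A l2 y"
    and orth: "(\<Sum>i<n. y i * x i) = 0"
  shows "qform n A (\<lambda>i. a * x i + t * y i) = a\<^sup>2 * l1 * sqnorm n x + t\<^sup>2 * l2 * sqnorm n y"
    and "sqnorm n (\<lambda>i. a * x i + t * y i) = a\<^sup>2 * sqnorm n x + t\<^sup>2 * sqnorm n y"
proof -
  have "(\<Sum>i<n. y i * (\<Sum>j<n. A i j * (a * x j))) = (\<Sum>i<n. a * l1 * (y i * x i))"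
    using x unfolding eigvec_def by (intro sum.cong refl) (simp add: sum_distrib_left[symmetric] ac_simps)
  also have "\<dots> = 0" using orth by (simp add: sum_distrib_left[symmetric])
  finally have cross: "(\<Sum>i<n. y i * (\<Sum>j<n. A i j * (a * x j))) = 0" .
  show "qform n A (\<lambda>i. a * x i + t * y i) = a\<^sup>2 * l1 * sqnorm n x + t\<^sup>2 * l2 * sqnorm n y"
    using qform_add[OF S, of "\<lambda>i. a * x i" t y] cross
    by (simp add: qform_scale eigvec_qform[OF x] eigvec_qform[OF y])
  have "(\<Sum>i<n. y i * (a * x i)) = 0" using orth by (simp add: sum_distrib_left[symmetric] ac_simps)
  thus "sqnorm n (\<lambda>i. a * x i + t * y i) = a\<^sup>2 * sqnorm n x + t\<^sup>2 * sqnorm n y"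
    using sqnorm_add[of n "\<lambda>i. a * x i" t y] by (simp add: sqnorm_scale)
qed

lemma perron_eigenvalue_simple:
  assumes S: "symm n A" and nn: "\<forall>i<n. \<forall>j<n. A i j \<ge> 0" and cn: "connected_support n A"
    and sp: "spectral_data n A d" and k: "k1 < n" "k2 < n" "k1 \<noteq> k2"
    and mx: "\<forall>k<n. d k \<le> d k1"
  shows "d k2 < d k1"
proof (rule ccontr)
  assume "\<not> d k2 < d k1"
  hence "d k1 = d k2" using mx k by force
  with spectral_data_eigvec_vanishing[OF sp k] obtain x where x: "eigvec n A (d k1) x" "x 0 = 0"
    using k by auto
  have "\<forall>y. qform n A y \<le> d k1 * sqnorm n y" using spectral_data_qform_le[OF sp mx] by blast
  from perron_eigvec_nowhere_zero[OF S nn cn this x(1)] x(2) k show False by auto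
qed

text \<open>The combination of an eigenvector of \<open>\<lambda>\<^sub>1\<close> and one of \<open>\<lambda>\<^sub>2\<close> that vanishes at \<open>v\<close>
  has Rayleigh quotient above \<open>\<lambda>\<^sub>2\<close> and lives on the matrix with row and column \<open>v\<close> deleted.\<close>

lemma del_row_col_radius_gt_eigenvalue:
  assumes S: "symm n A" and n2: "n \<ge> 2"
    and x: "eigvec n A l1 x" and y: "eigvec n A l2 y" and lt: "l2 < l1"
  shows "\<exists>v<n. l2 < spectral_radius (cmat (n - 1) (del_row_col A v))"
proof -
  from y obtain v where v: "v < n" "y v \<noteq> 0" unfolding eigvec_def by auto
  define z where "z = (\<lambda>i. y v * x i + (- x v) * y i)"
  have orth: "(\<Sum>i<n. y i * x i) = 0" using eigvec_orthogonal[OF S x y] lt by simp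
  note comb = orthogonal_eigvec_combination[OF S x y orth, of "y v" "- x v", folded z_def]
  from x obtain i1 where "i1 < n" "x i1 \<noteq> 0" unfolding eigvec_def by auto
  hence nx: "sqnorm n x > 0" by (rule sqnorm_pos)
  have "qform n A z - l2 * sqnorm n z = (y v)\<^sup>2 * (l1 - l2) * sqnorm n x"
    unfolding comb by (simp add: algebra_simps)
  moreover have "(y v)\<^sup>2 * (l1 - l2) * sqnorm n x > 0" using v lt nx by simp
  ultimately have "l2 * sqnorm n z < qform n A z" by linarith
  moreover have "sqnorm n z > 0"
    unfolding comb using v nx sqnorm_nonneg[of n y] by (simp add: add_pos_nonneg)
  moreover obtain d where sp: "spectral_data (n - 1) (del_row_col A v) d"
    using spectral_data_exists[OF symm_del_row_col[OF S v(1)]] by auto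
  moreover have "z v = 0" unfolding z_def by simp
  ultimately have "l2 < spectral_radius (cmat (n - 1) (del_row_col A v))"
    using less_spectral_radius_of_qform_gt[OF sp, of l2 "\<lambda>i. z (skip v i)"]
      qform_del_row_col[where z=z and M=A, OF v(1)] sqnorm_del_row_col[where z=z, OF v(1)] by simp
  thus ?thesis using v by auto
qed

lemma second_eigenvalue_lt_del_row_col_radius:
  assumes S: "symm n A" and nn: "\<forall>i<n. \<forall>j<n. A i j \<ge> 0" and cn: "connected_support n A" and n2: "n \<ge> 2"
    and sp: "spectral_data n A d" and k: "k1 < n" "k2 < n" "k1 \<noteq> k2"
    and mx: "\<forall>k<n. d k \<le> d k1"
  shows "\<exists>v<n. d k2 < spectral_radius (cmat (n - 1) (del_row_col A v))"
proof -
  from spectral_data_eigvec[OF sp k(1)] spectral_data_eigvec[OF sp k(2)]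
  obtain x y where "eigvec n A (d k1) x" "eigvec n A (d k2) y" by blast
  from del_row_col_radius_gt_eigenvalue[OF S n2 this perron_eigenvalue_simple[OF S nn cn sp k mx]]
  show ?thesis .
qed

lemma del_row_col_radius_le_del_entry_radius:
  assumes S: "symm n A" and nn: "\<forall>i<n. \<forall>j<n. A i j \<ge> 0" and n2: "n \<ge> 2"
    and v: "v < n" and q: "q < n" "v \<noteq> q"
  shows "spectral_radius (cmat (n-1) (del_row_col A v)) \<le> spectral_radius (cmat n (del_entry A v q))"
proof -
  obtain d' where sp': "spectral_data (n-1) (del_row_col A v) d'" using spectral_data_exists[OF symm_del_row_col[OF S v]] by auto
  obtain d'' where sp'': "spectral_data n (del_entry A v q) d''" using spectral_data_exists[OF symm_del_entry[OF S]] by auto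
  have n1: "n - 1 > 0" using n2 by simp
  from spectral_data_radius_eigvec[OF sp' n1] obtain x r where ev: "eigvec (n-1) (del_row_col A v) r x"
    and r: "\<bar>r\<bar> = spectral_radius (cmat (n-1) (del_row_col A v))" by auto
  define y where "y = (\<lambda>i. \<bar>x i\<bar>)"
  have nnm: "\<forall>i<n-1. \<forall>j<n-1. del_row_col A v i j \<ge> 0" using nn v unfolding del_row_col_def skip_def by auto
  have "qform (n-1) (del_row_col A v) x = r * sqnorm (n-1) x" by (rule eigvec_qform[OF ev])
  hence ge: "\<bar>r\<bar> * sqnorm (n-1) y \<le> qform (n-1) (del_row_col A v) y"
    using abs_qform_le[OF nnm, of x] sqnorm_nonneg[of "n-1" x] unfolding y_def sqnorm_def
    by (simp add: abs_mult)
  define z where "z = zero_ext v y"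
  have zv: "z v = 0" unfolding z_def by simp
  have zs: "(\<lambda>i. z (skip v i)) = y" unfolding z_def by simp
  have "qform n (del_entry A v q) z = qform n A z" using qform_del_entry[OF v q] zv by simp
  also have "\<dots> = qform (n-1) (del_row_col A v) y" using qform_del_row_col[where v=v and n=n and z=z and M=A, OF v zv] zs by simp
  finally have qz: "qform n (del_entry A v q) z = qform (n-1) (del_row_col A v) y" .
  have nz: "sqnorm n z = sqnorm (n-1) y" using sqnorm_del_row_col[where v=v and n=n and z=z, OF v zv] zs by simp
  from ev obtain i1 where "i1 < n - 1" "x i1 \<noteq> 0" unfolding eigvec_def by auto
  hence "sqnorm (n-1) y > 0" unfolding y_def by (intro sqnorm_pos) auto
  hence "\<bar>r\<bar> \<le> spectral_radius (cmat n (del_entry A v q))"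
    using le_spectral_radius_of_qform_ge[OF sp'', of "\<bar>r\<bar>" z] ge qz nz n2 by simp
  thus ?thesis using r by simp
qed

lemma qform_unit_diff:
  fixes M :: "nat \<Rightarrow> nat \<Rightarrow> real"
  assumes p: "p < n" and q: "q < n" and pq: "p \<noteq> q"
    and w: "w = (\<lambda>i. if i = p then 1 else if i = q then -1 else 0)"
  shows "qform n M w = M p p - M p q - M q p + M q q" and "sqnorm n w = 2"
proof -
  have two: "(\<Sum>j<n. f j) = f p + f q" if "\<forall>j<n. j \<noteq> p \<and> j \<noteq> q \<longrightarrow> f j = 0" for f :: "nat \<Rightarrow> real"
    using p q pq that by (subst sum.mono_neutral_right[of "{..<n}" "{p, q}"]) auto
  have "qform n M w = (\<Sum>i<n. w i * M i p * w p + w i * M i q * w q)"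
    unfolding qform_def by (intro sum.cong refl two) (simp add: w)
  also have "\<dots> = (w p * M p p * w p + w p * M p q * w q) + (w q * M q p * w p + w q * M q q * w q)"
    by (rule two) (simp add: w)
  finally show "qform n M w = M p p - M p q - M q p + M q q" using pq by (simp add: w)
  show "sqnorm n w = 2" unfolding sqnorm_def using pq by (subst two) (auto simp: w)
qed

lemma qform_le_of_spectral_radius_le:
  assumes "symm n M" "spectral_radius (cmat n M) \<le> \<theta>"
  shows "qform n M y \<le> \<theta> * sqnorm n y"
proof -
  obtain d where sp: "spectral_data n M d" using spectral_data_exists[OF assms(1)] by blast
  have "spectral_radius (cmat n M) * sqnorm n y \<le> \<theta> * sqnorm n y"
    using assms(2) sqnorm_nonneg[of n y] by (rule mult_right_mono)
  thus ?thesis using spectral_data_qform_le_radius[OF sp, of y] by linarith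
qed

lemma alternating_eigvec_of_del_entry_radius_le:
  assumes ent: "\<forall>i<n. \<forall>j<n. A i j \<in> {0,1}" and S: "symm n A" and dg: "\<forall>i<n. A i i = 0"
    and cn: "connected_support n A" and n2: "n \<ge> 2"
    and sp: "spectral_data n A d" and k0: "k0 < n" "\<forall>k<n. d k0 \<le> d k"
    and hyp: "\<forall>p<n. \<forall>q<n. A p q \<noteq> 0 \<longrightarrow> spectral_radius (cmat n (del_entry A p q)) \<le> - d k0"
  shows "\<exists>x :: nat \<Rightarrow> real. \<forall>i<n. \<forall>j<n. A i j \<noteq> 0 \<longrightarrow> x i * x j < 0"
proof -
  obtain q where q: "q < n" "q \<noteq> 0" "A 0 q \<noteq> 0"
    using connected_support_exit[OF cn, of "{0}" 0 1] n2 by auto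
  define w :: "nat \<Rightarrow> real" where "w = (\<lambda>i. if i = 0 then 1 else if i = q then -1 else 0)"
  have n0: "0 < n" using n2 by simp
  have "A 0 q = 1" "A q 0 = 1" "A 0 0 = 0" "A q q = 0"
    using q ent S dg n0 unfolding symm_def by (metis insert_iff singletonD)+
  hence "qform n A w = -2" "sqnorm n w = 2"
    using qform_unit_diff[OF n0 q(1) q(2)[symmetric] w_def] by simp_all
  moreover have "d k0 * sqnorm n w \<le> qform n A w" using spectral_data_qform_ge[OF sp k0(2)] .
  ultimately have neg: "d k0 < 0" by simp
  from spectral_data_eigvec[OF sp k0(1)] obtain x where ev: "eigvec n A (d k0) x" by blast
  have absA: "\<forall>i<n. \<forall>j<n. \<bar>A i j\<bar> = A i j" using ent by force
  have H: "\<forall>p<n. \<forall>q<n. A p q \<noteq> 0 \<longrightarrow> (\<forall>y. qform n (del_entry (\<lambda>i j. \<bar>A i j\<bar>) p q) y \<le> \<bar>d k0\<bar> * sqnorm n y)"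
  proof (intro allI impI)
    fix p q y assume "p < n" "q < n" "A p q \<noteq> 0"
    hence "qform n (del_entry A p q) y \<le> \<bar>d k0\<bar> * sqnorm n y"
      using hyp neg by (intro qform_le_of_spectral_radius_le symm_del_entry S) auto
    moreover have "qform n (del_entry (\<lambda>i j. \<bar>A i j\<bar>) p q) y = qform n (del_entry A p q) y"
      by (rule qform_cong) (use absA in \<open>auto simp: del_entry_def\<close>)
    ultimately show "qform n (del_entry (\<lambda>i j. \<bar>A i j\<bar>) p q) y \<le> \<bar>d k0\<bar> * sqnorm n y" by simp
  qed
  have "connected_support n (\<lambda>i j. \<bar>A i j\<bar>)"
    by (rule connected_support_cong[OF _ cn]) (use absA in auto)
  from signed_eigvec_edge_signs_strict[OF S dg this ev _ _ H, of "-1"] neg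
  have signs: "\<forall>i<n. \<forall>j<n. A i j \<noteq> 0 \<longrightarrow> 0 < - (x i * A i j * x j)" by auto
  have "x i * x j < 0" if "i < n" "j < n" "A i j \<noteq> 0" for i j
  proof -
    have "A i j = 1" using ent[rule_format, OF that(1,2)] that(3) by simp
    thus ?thesis using signs[rule_format, OF that] by simp
  qed
  hence "\<forall>i<n. \<forall>j<n. A i j \<noteq> 0 \<longrightarrow> x i * x j < 0" by simp
  thus ?thesis by (intro exI[of _ x])
qed

lemma switching_qform:
  fixes B :: "nat \<Rightarrow> nat \<Rightarrow> real"
  assumes nz: "\<forall>i<n. x i \<noteq> 0" and s: "\<bar>s\<bar> = 1"
    and signs: "\<forall>i<n. \<forall>j<n. B i j \<noteq> 0 \<longrightarrow> 0 < s * (x i * B i j * x j)"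
  shows "qform n B (\<lambda>i. sgn (x i) * u i) = s * qform n (\<lambda>i j. \<bar>B i j\<bar>) u"
    and "sqnorm n (\<lambda>i. sgn (x i) * u i) = sqnorm n u"
proof -
  have flip: "sgn (x i) * B i j * sgn (x j) = s * \<bar>B i j\<bar>" if ij: "i < n" "j < n" for i j
  proof (cases "B i j = 0")
    case False
    hence "0 < s * (x i * B i j * x j)" using signs ij by blast
    moreover have "sgn t = s" if "0 < s * t" for t
      using that s by (cases "s \<ge> 0") (auto simp: sgn_if abs_if zero_less_mult_iff split: if_splits)
    ultimately have "sgn (x i * B i j * x j) = s" by blast
    moreover have "sgn (x i) * B i j * sgn (x j) = sgn (x i * B i j * x j) * \<bar>B i j\<bar>"
      by (simp add: sgn_mult mult.assoc mult.left_commute[of "sgn (B i j)"] abs_mult_sgn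
          mult.commute[of "\<bar>B i j\<bar>"] sgn_mult_abs)
    ultimately show ?thesis by simp
  qed simp
  have "qform n B (\<lambda>i. sgn (x i) * u i) = (\<Sum>i<n. \<Sum>j<n. u i * (sgn (x i) * B i j * sgn (x j)) * u j)"
    unfolding qform_def by (intro sum.cong refl) (simp add: ac_simps)
  also have "\<dots> = (\<Sum>i<n. \<Sum>j<n. s * (u i * \<bar>B i j\<bar> * u j))"
    using flip by (intro sum.cong refl) (simp add: ac_simps)
  finally show "qform n B (\<lambda>i. sgn (x i) * u i) = s * qform n (\<lambda>i j. \<bar>B i j\<bar>) u"
    unfolding qform_def by (simp add: sum_distrib_left)
  show "sqnorm n (\<lambda>i. sgn (x i) * u i) = sqnorm n u" unfolding sqnorm_def using nz
    by (intro sum.cong refl) (auto simp: power_mult_distrib sgn_if)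
qed

text \<open>If no edge deletion raised the radius above \<open>\<rho>(B)\<close>, an eigenvector \<open>x\<close> of \<open>B\<close> for
  \<open>\<plusminus>\<rho>(B)\<close> would give all terms \<open>x i * B i j * x j\<close> the same sign \<open>s\<close>; flipping the signs of
  a Perron vector of \<open>\<bar>B\<bar>\<close> along \<open>sgn x\<close> then shows \<open>\<rho>(\<bar>B\<bar>) \<le> \<rho>(B)\<close>.\<close>

lemma signed_radius_lt_del_entry_radius:
  assumes S: "symm n B" and dg: "\<forall>i<n. B i i = 0"
    and cn: "connected_support n (\<lambda>i j. \<bar>B i j\<bar>)" and n0: "n > 0"
    and lt: "spectral_radius (cmat n B) < spectral_radius (cmat n (\<lambda>i j. \<bar>B i j\<bar>))"
  shows "\<exists>p<n. \<exists>q<n. B p q \<noteq> 0 \<and> spectral_radius (cmat n B) < spectral_radius (cmat n (del_entry (\<lambda>i j. \<bar>B i j\<bar>) p q))"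
proof (rule ccontr)
  assume "\<not> ?thesis"
  hence hyp: "\<forall>p<n. \<forall>q<n. B p q \<noteq> 0 \<longrightarrow> spectral_radius (cmat n (del_entry (\<lambda>i j. \<bar>B i j\<bar>) p q)) \<le> spectral_radius (cmat n B)"
    by (meson not_less)
  define A where "A = (\<lambda>i j. \<bar>B i j\<bar>)"
  have SA: "symm n A" using S unfolding symm_def A_def by auto
  obtain dB where spB: "spectral_data n B dB" using spectral_data_exists[OF S] by auto
  obtain dA where spA: "spectral_data n A dA" using spectral_data_exists[OF SA] by auto
  from spectral_data_radius_eigvec[OF spB n0] obtain x r
    where ev: "eigvec n B r x" and r: "\<bar>r\<bar> = spectral_radius (cmat n B)" by auto
  have H: "\<forall>p<n. \<forall>q<n. B p q \<noteq> 0 \<longrightarrow> (\<forall>y. qform n (del_entry A p q) y \<le> \<bar>r\<bar> * sqnorm n y)"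
  proof (intro allI impI)
    fix p q y assume "p < n" "q < n" "B p q \<noteq> 0"
    hence "spectral_radius (cmat n (del_entry A p q)) \<le> \<bar>r\<bar>" using hyp r unfolding A_def by simp
    thus "qform n (del_entry A p q) y \<le> \<bar>r\<bar> * sqnorm n y"
      by (rule qform_le_of_spectral_radius_le[OF symm_del_entry[OF SA]])
  qed
  define s :: real where "s = (if r \<ge> 0 then 1 else -1)"
  have s: "\<bar>s\<bar> = 1" "s * r = \<bar>r\<bar>" unfolding s_def by auto
  note switch = switching_qform[OF signed_eigvec_nowhere_zero[OF S dg cn ev H[unfolded A_def]] s(1)
      signed_eigvec_edge_signs_strict[OF S dg cn ev s H[unfolded A_def]]]
  from perron_nonneg_eigvec[OF SA _ spA n0] obtain u
    where eu: "eigvec n A (spectral_radius (cmat n A)) u" unfolding A_def by auto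
  have "\<bar>spectral_radius (cmat n A) * sqnorm n u\<bar> \<le> spectral_radius (cmat n B) * sqnorm n u"
    using abs_qform_le_spectral_radius[OF spB, of "\<lambda>i. sgn (x i) * u i"] s
    unfolding switch eigvec_qform[OF eu[unfolded A_def]] by (simp add: abs_mult A_def)
  hence "spectral_radius (cmat n A) * sqnorm n u \<le> spectral_radius (cmat n B) * sqnorm n u"
    using abs_ge_self[of "spectral_radius (cmat n A) * sqnorm n u"] by linarith
  moreover have "sqnorm n u > 0" using eu sqnorm_pos unfolding eigvec_def by blast
  ultimately show False using lt unfolding A_def by simp
qed

section \<open>Graphs\<close>

definition signed_adj_fun :: "'a::linorder set \<Rightarrow> 'a set set \<Rightarrow> ('a set \<Rightarrow> int) \<Rightarrow> nat \<Rightarrow> nat \<Rightarrow> real" where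
  "signed_adj_fun V E \<pi> = (\<lambda>i j. if {sorted_list_of_set V ! i, sorted_list_of_set V ! j} \<in> E
      then real_of_int (\<pi> {sorted_list_of_set V ! i, sorted_list_of_set V ! j}) else 0)"

definition adj_fun :: "'a::linorder set \<Rightarrow> 'a set set \<Rightarrow> nat \<Rightarrow> nat \<Rightarrow> real" where
  "adj_fun V E = signed_adj_fun V E (\<lambda>_. 1)"

lemma signed_adj_mat_cmat: "signed_adj_mat V E \<pi> = cmat (card V) (signed_adj_fun V E \<pi>)"
  unfolding signed_adj_mat_def cmat_def signed_adj_fun_def Let_def by (intro eq_matI) auto

lemma rho_eq_adj_fun: "rho V E = spectral_radius (cmat (card V) (adj_fun V E))"
  unfolding rho_def adj_mat_def adj_fun_def signed_adj_mat_cmat ..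

lemma rho_signed_eq_signed_adj_fun: "rho_signed V E \<pi> = spectral_radius (cmat (card V) (signed_adj_fun V E \<pi>))"
  unfolding rho_signed_def signed_adj_mat_cmat ..

lemma adj_mat_cmat: "adj_mat V E = cmat (card V) (adj_fun V E)"
  unfolding adj_mat_def adj_fun_def signed_adj_mat_cmat ..

lemma cmat_cong: "(\<forall>i<n. \<forall>j<n. M i j = M' i j) \<Longrightarrow> cmat n M = cmat n M'"
  unfolding cmat_def by (intro eq_matI) auto

lemma signed_adj_fun_symm: "symm n (signed_adj_fun V E \<pi>)"
  unfolding symm_def signed_adj_fun_def by (auto simp: insert_commute)

lemma adj_fun_symm: "symm n (adj_fun V E)"
  unfolding adj_fun_def by (rule signed_adj_fun_symm)

lemma signed_adj_fun_diag: "simple_graph V E \<Longrightarrow> signed_adj_fun V E \<pi> i i = 0"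
  unfolding simple_graph_def signed_adj_fun_def by fastforce

lemma adj_fun_diag: "simple_graph V E \<Longrightarrow> adj_fun V E i i = 0"
  unfolding adj_fun_def by (rule signed_adj_fun_diag)

lemma adj_fun_range: "adj_fun V E i j \<in> {0,1}"
  unfolding adj_fun_def signed_adj_fun_def by auto

lemma adj_fun_nonneg: "adj_fun V E i j \<ge> 0"
  unfolding adj_fun_def signed_adj_fun_def by auto

lemma adj_fun_nonzero_iff: "adj_fun V E i j \<noteq> 0 \<longleftrightarrow> {sorted_list_of_set V ! i, sorted_list_of_set V ! j} \<in> E"
  unfolding adj_fun_def signed_adj_fun_def by auto

lemma abs_signed_adj_fun: "signing E \<pi> \<Longrightarrow> (\<lambda>i j. \<bar>signed_adj_fun V E \<pi> i j\<bar>) = adj_fun V E"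
  unfolding signing_def signed_adj_fun_def adj_fun_def by (intro ext) (auto split: if_splits)

lemma signed_adj_fun_restrict: "signed_adj_fun V E \<pi> = signed_adj_fun V E (restrict \<pi> E)"
  unfolding signed_adj_fun_def by (intro ext) auto

lemma sorted_list_of_set_index: "finite V \<Longrightarrow> w \<in> V \<Longrightarrow> \<exists>j<card V. sorted_list_of_set V ! j = w"
  by (metis in_set_conv_nth length_sorted_list_of_set set_sorted_list_of_set)

lemma sorted_list_of_set_nth_in: "finite V \<Longrightarrow> i < card V \<Longrightarrow> sorted_list_of_set V ! i \<in> V"
  by (metis nth_mem length_sorted_list_of_set set_sorted_list_of_set)

lemma sorted_list_of_set_nth_eq_iff: "finite V \<Longrightarrow> i < card V \<Longrightarrow> j < card V \<Longrightarrow> (sorted_list_of_set V ! i = sorted_list_of_set V ! j) = (i = j)"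
  by (metis distinct_sorted_list_of_set length_sorted_list_of_set nth_eq_iff_index_eq)

lemma cmat_adj_fun_del_edge:
  assumes fin: "finite V" and p: "p < card V" and q: "q < card V"
  shows "cmat (card V) (adj_fun V (del_edge_E E {sorted_list_of_set V ! p, sorted_list_of_set V ! q}))
       = cmat (card V) (del_entry (adj_fun V E) p q)"
proof (rule cmat_cong, intro allI impI)
  fix i j assume i: "i < card V" and j: "j < card V"
  have "({sorted_list_of_set V ! i, sorted_list_of_set V ! j} = {sorted_list_of_set V ! p, sorted_list_of_set V ! q})
     = ((i = p \<and> j = q) \<or> (i = q \<and> j = p))"
    unfolding doubleton_eq_iff using sorted_list_of_set_nth_eq_iff[OF fin] i j p q by auto
  thus "adj_fun V (del_edge_E E {sorted_list_of_set V ! p, sorted_list_of_set V ! q}) i j = del_entry (adj_fun V E) p q i j"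
    unfolding adj_fun_def signed_adj_fun_def del_entry_def del_edge_E_def by auto
qed

lemma remove1_nth:
  assumes d: "distinct xs" and p: "p < length xs" and i: "i < length xs - 1"
  shows "remove1 (xs ! p) xs ! i = xs ! (skip p i)"
proof -
  have split: "xs = take p xs @ xs ! p # drop (Suc p) xs" by (rule id_take_nth_drop[OF p])
  have nin: "xs ! p \<notin> set (take p xs)"
  proof
    assume "xs ! p \<in> set (take p xs)"
    then obtain j where j: "j < length (take p xs)" "take p xs ! j = xs ! p" by (auto simp: in_set_conv_nth)
    hence "xs ! j = xs ! p" "j < p" using p by auto
    thus False using nth_eq_iff_index_eq[OF d] p by force
  qed
  have "remove1 (xs ! p) xs = take p xs @ drop (Suc p) xs"
    by (subst split) (simp add: remove1_append nin)
  thus ?thesis using p i unfolding skip_def by (auto simp: nth_append min_def)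
qed

lemma rho_del_vertex:
  assumes fin: "finite V" and p: "p < card V"
  shows "rho (del_vertex_V V (sorted_list_of_set V ! p)) (del_vertex_E E (sorted_list_of_set V ! p))
       = spectral_radius (cmat (card V - 1) (del_row_col (adj_fun V E) p))"
proof -
  define vs where "vs = sorted_list_of_set V"
  define v where "v = vs ! p"
  have vV: "v \<in> V" unfolding v_def vs_def using sorted_list_of_set_nth_in[OF fin p] .
  have cV: "card (V - {v}) = card V - 1" using vV fin by simp
  have sl: "sorted_list_of_set (V - {v}) = remove1 v vs"
    unfolding vs_def using sorted_list_of_set_remove[OF fin] .
  have nth: "\<And>i. i < card V - 1 \<Longrightarrow> sorted_list_of_set (V - {v}) ! i = vs ! (skip p i)"
  proof -
    fix i assume i: "i < card V - 1"
    have "sorted_list_of_set (V - {v}) ! i = remove1 v vs ! i" using sl by simp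
    also have "\<dots> = vs ! skip p i" unfolding v_def
      by (rule remove1_nth) (use fin p i in \<open>auto simp: vs_def\<close>)
    finally show "sorted_list_of_set (V - {v}) ! i = vs ! (skip p i)" .
  qed
  have sk: "\<And>i. i < card V - 1 \<Longrightarrow> skip p i < card V \<and> skip p i \<noteq> p"
    unfolding skip_def by auto
  have "cmat (card (V - {v})) (adj_fun (V - {v}) (del_vertex_E E v)) = cmat (card V - 1) (del_row_col (adj_fun V E) p)"
    unfolding cV
  proof (rule cmat_cong, intro allI impI)
    fix i j assume i: "i < card V - 1" and j: "j < card V - 1"
    have ne: "vs ! skip p i \<noteq> v" "vs ! skip p j \<noteq> v"
      using sorted_list_of_set_nth_eq_iff[OF fin] sk[OF i] sk[OF j] p unfolding v_def vs_def by auto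
    show "adj_fun (V - {v}) (del_vertex_E E v) i j = del_row_col (adj_fun V E) p i j"
      unfolding adj_fun_def signed_adj_fun_def del_row_col_def del_vertex_E_def nth[OF i] nth[OF j]
      using ne unfolding vs_def by auto
  qed
  thus ?thesis unfolding rho_eq_adj_fun del_vertex_V_def v_def vs_def by simp
qed

lemma connected_support_adj_fun:
  assumes sg: "simple_graph V E" and cg: "connected_graph V E"
  shows "connected_support (card V) (adj_fun V E)"
  unfolding connected_support_def
proof (intro allI impI)
  fix S assume S: "S \<subseteq> {..<card V}" and ne: "S \<noteq> {}"
    and cl: "\<forall>i\<in>S. \<forall>j<card V. adj_fun V E i j \<noteq> 0 \<longrightarrow> j \<in> S"
  have fin: "finite V" using sg unfolding simple_graph_def by auto
  define vs where "vs = sorted_list_of_set V"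
  from ne obtain i0 where i0: "i0 \<in> S" by auto
  have i0n: "i0 < card V" using i0 S by auto
  define T where "T = (\<lambda>i. vs ! i) ` S"
  have reach: "\<And>w. (\<lambda>x y. {x, y} \<in> E)\<^sup>*\<^sup>* (vs ! i0) w \<Longrightarrow> w \<in> T"
  proof -
    fix w assume "(\<lambda>x y. {x, y} \<in> E)\<^sup>*\<^sup>* (vs ! i0) w"
    thus "w \<in> T"
    proof (induct rule: rtranclp_induct)
      case base thus ?case unfolding T_def using i0 by auto
    next
      case (step x y)
      from step(3) obtain i where i: "i \<in> S" "x = vs ! i" unfolding T_def by auto
      have "{x,y} \<subseteq> V" using step(2) sg unfolding simple_graph_def by auto
      hence "y \<in> V" by auto
      from sorted_list_of_set_index[OF fin this] obtain j where j: "j < card V" "vs ! j = y" unfolding vs_def by auto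
      have "adj_fun V E i j \<noteq> 0" unfolding adj_fun_nonzero_iff using step(2) i j unfolding vs_def by auto
      hence "j \<in> S" using cl i j by auto
      thus ?case unfolding T_def using j by auto
    qed
  qed
  show "{..<card V} \<subseteq> S"
  proof
    fix k assume k: "k \<in> {..<card V}"
    have "vs ! k \<in> V" using sorted_list_of_set_nth_in[OF fin, of k] k unfolding vs_def by auto
    moreover have "vs ! i0 \<in> V" using sorted_list_of_set_nth_in[OF fin i0n] unfolding vs_def .
    ultimately have "(\<lambda>x y. {x, y} \<in> E)\<^sup>*\<^sup>* (vs ! i0) (vs ! k)" using cg unfolding connected_graph_def by auto
    hence "vs ! k \<in> T" by (rule reach)
    then obtain i where i: "i \<in> S" "vs ! k = vs ! i" unfolding T_def by auto
    hence "k = i" using sorted_list_of_set_nth_eq_iff[OF fin, of k i] k S unfolding vs_def by auto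
    thus "k \<in> S" using i by simp
  qed
qed

lemma connected_support_neighbour:
  assumes "connected_support n A" "n \<ge> 2" "p < n"
  shows "\<exists>q<n. A p q \<noteq> 0 \<and> q \<noteq> p"
  using connected_support_exit[OF assms(1), of "{p}" p "if p = 0 then 1 else 0"] assms(2,3) by auto

locale connected_simple_graph =
  fixes V :: "'a::linorder set" and E :: "'a set set"
  assumes simple: "simple_graph V E" and connected: "connected_graph V E" and two_vertices: "card V \<ge> 2"
begin

lemma finite_vertices: "finite V"
  using simple unfolding simple_graph_def by simp

lemma finite_edges: "finite E"
proof -
  have "E \<subseteq> Pow V" using simple unfolding simple_graph_def by auto
  thus ?thesis using finite_vertices by (meson finite_Pow_iff finite_subset)
qed

lemma adj_fun_connected: "connected_support (card V) (adj_fun V E)"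
  by (rule connected_support_adj_fun[OF simple connected])

lemma adj_fun_nonneg_on: "\<forall>i<card V. \<forall>j<card V. adj_fun V E i j \<ge> 0"
  by (simp add: adj_fun_nonneg)

lemma del_edge_radius_le_rho_E:
  assumes "p < card V" "q < card V" "adj_fun V E p q \<noteq> 0"
  shows "spectral_radius (cmat (card V) (del_entry (adj_fun V E) p q)) \<le> rho_E V E"
proof -
  define vs where "vs = sorted_list_of_set V"
  have e: "{vs ! p, vs ! q} \<in> E" using assms(3) unfolding adj_fun_nonzero_iff vs_def .
  have "spectral_radius (cmat (card V) (del_entry (adj_fun V E) p q)) = rho V (del_edge_E E {vs ! p, vs ! q})"
    unfolding rho_eq_adj_fun vs_def using cmat_adj_fun_del_edge[OF finite_vertices assms(1,2)] by simp
  also have "\<dots> \<le> rho_E V E" unfolding rho_E_def using finite_edges e by (intro Max_ge) auto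
  finally show ?thesis .
qed

lemma lambda2_lt_rho_V: "lambda V E 2 < rho_V V E"
proof -
  let ?n = "card V" and ?A = "adj_fun V E"
  obtain d where sp: "spectral_data ?n ?A d" using spectral_data_exists[OF adj_fun_symm] by blast
  obtain k1 k2 where k: "k1 < ?n" "k2 < ?n" "k1 \<noteq> k2" and mx: "\<forall>k<?n. d k \<le> d k1"
    and lam: "lambda V E 2 = d k2"
    using eigenvalues_desc_second[OF sp two_vertices] unfolding lambda_def adj_mat_cmat by auto
  obtain v where v: "v < ?n" "d k2 < spectral_radius (cmat (?n - 1) (del_row_col ?A v))"
    using second_eigenvalue_lt_del_row_col_radius[OF adj_fun_symm adj_fun_nonneg_on adj_fun_connected
        two_vertices sp k mx] by blast
  have "spectral_radius (cmat (?n - 1) (del_row_col ?A v))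
      = rho (del_vertex_V V (sorted_list_of_set V ! v)) (del_vertex_E E (sorted_list_of_set V ! v))"
    using rho_del_vertex[OF finite_vertices, of v E] v by simp
  also have "\<dots> \<le> rho_V V E" unfolding rho_V_def
    using finite_vertices sorted_list_of_set_nth_in[OF finite_vertices, of v] v
    by (intro Max_ge) auto
  finally show ?thesis using v lam by simp
qed

lemma rho_V_le_rho_E: "rho_V V E \<le> rho_E V E"
proof -
  let ?n = "card V" and ?A = "adj_fun V E"
  have "rho (del_vertex_V V u) (del_vertex_E E u) \<le> rho_E V E" if u: "u \<in> V" for u
  proof -
    obtain p where p: "p < ?n" "sorted_list_of_set V ! p = u"
      using sorted_list_of_set_index[OF finite_vertices u] by auto
    obtain q where q: "q < ?n" "?A p q \<noteq> 0" "q \<noteq> p"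
      using connected_support_neighbour[OF adj_fun_connected _ p(1)] two_vertices
      by auto
    have "rho (del_vertex_V V u) (del_vertex_E E u) = spectral_radius (cmat (?n - 1) (del_row_col ?A p))"
      using rho_del_vertex[OF finite_vertices, of p E] p by simp
    also have "\<dots> \<le> spectral_radius (cmat ?n (del_entry ?A p q))"
      by (rule del_row_col_radius_le_del_entry_radius[OF adj_fun_symm adj_fun_nonneg_on two_vertices
            p(1) q(1) q(3)[symmetric]])
    also have "\<dots> \<le> rho_E V E" using del_edge_radius_le_rho_E p q by blast
    finally show ?thesis .
  qed
  moreover have "V \<noteq> {}" using two_vertices by auto
  ultimately show ?thesis unfolding rho_V_def using finite_vertices by (subst Max_le_iff) auto
qed

lemma bipartite_of_alternating:
  assumes x: "\<forall>i<card V. \<forall>j<card V. adj_fun V E i j \<noteq> 0 \<longrightarrow> x i * x j < (0::real)"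
  shows "bipartite_graph V E"
proof -
  define vs where "vs = sorted_list_of_set V"
  define S where "S = {vs ! i | i. i < card V \<and> x i > 0}"
  have memS: "(vs ! k \<in> S) = (x k > 0)" if "k < card V" for k
    using sorted_list_of_set_nth_eq_iff[OF finite_vertices] that unfolding S_def vs_def by auto
  have "(a \<in> S) = (b \<notin> S)" if ab: "{a, b} \<in> E" for a b
  proof -
    have "{a, b} \<subseteq> V" using ab simple unfolding simple_graph_def by auto
    then obtain i j where i: "i < card V" "vs ! i = a" and j: "j < card V" "vs ! j = b"
      using sorted_list_of_set_index[OF finite_vertices, of a] sorted_list_of_set_index[OF finite_vertices, of b]
      unfolding vs_def by auto
    have "adj_fun V E i j \<noteq> 0" using ab i j unfolding adj_fun_nonzero_iff vs_def by simp
    hence "x i * x j < 0" using x i(1) j(1) by simp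
    hence "(x i > 0) = (\<not> x j > 0)" by (auto simp: mult_less_0_iff)
    thus ?thesis using memS[OF i(1)] memS[OF j(1)] i j by simp
  qed
  moreover have "S \<subseteq> V" using sorted_list_of_set_nth_in[OF finite_vertices] unfolding S_def vs_def by auto
  ultimately show ?thesis unfolding bipartite_graph_def by blast
qed

lemma neg_lambda_min_lt_rho_E:
  assumes "\<not> bipartite_graph V E"
  shows "- lambda V E (card V) < rho_E V E"
proof (rule ccontr)
  assume le: "\<not> - lambda V E (card V) < rho_E V E"
  let ?n = "card V" and ?A = "adj_fun V E"
  obtain d where sp: "spectral_data ?n ?A d" using spectral_data_exists[OF adj_fun_symm] by blast
  obtain k0 where k0: "k0 < ?n" "\<forall>k<?n. d k0 \<le> d k" and lam: "lambda V E (card V) = d k0"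
    using eigenvalues_desc_last[OF sp] two_vertices unfolding lambda_def adj_mat_cmat by auto
  have "\<forall>p<?n. \<forall>q<?n. ?A p q \<noteq> 0 \<longrightarrow> spectral_radius (cmat ?n (del_entry ?A p q)) \<le> - d k0"
    using del_edge_radius_le_rho_E le lam by force
  from alternating_eigvec_of_del_entry_radius_le[OF _ adj_fun_symm _ _ two_vertices sp k0 this]
  obtain x :: "nat \<Rightarrow> real" where "\<forall>i<?n. \<forall>j<?n. ?A i j \<noteq> 0 \<longrightarrow> x i * x j < 0"
    using adj_fun_range adj_fun_diag[OF simple] adj_fun_connected by blast
  hence "bipartite_graph V E" using bipartite_of_alternating by blast
  thus False using assms by simp
qed

lemma finite_rho_signed_Gamma: "finite (rho_signed V E ` Gamma V E)"
proof (rule finite_subset)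
  show "rho_signed V E ` Gamma V E \<subseteq> rho_signed V E ` (PiE E (\<lambda>_. {-1, 1}))"
  proof
    fix r assume "r \<in> rho_signed V E ` Gamma V E"
    then obtain \<pi> where \<pi>: "\<pi> \<in> Gamma V E" "r = rho_signed V E \<pi>" by auto
    have "restrict \<pi> E \<in> PiE E (\<lambda>_. {-1, 1})" using \<pi> unfolding Gamma_def signing_def by auto
    moreover have "r = rho_signed V E (restrict \<pi> E)"
      using \<pi> unfolding rho_signed_eq_signed_adj_fun by (simp add: signed_adj_fun_restrict[symmetric])
    ultimately show "r \<in> rho_signed V E ` (PiE E (\<lambda>_. {-1, 1}))" by auto
  qed
  show "finite (rho_signed V E ` (PiE E (\<lambda>_. {-1, 1})))"
    using finite_edges by (intro finite_imageI finite_PiE) auto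
qed

lemma rho_Gamma_lt_rho_E:
  assumes "Gamma V E \<noteq> {}"
  shows "rho_Gamma V E < rho_E V E"
proof -
  let ?n = "card V"
  have "rho_Gamma V E \<in> rho_signed V E ` Gamma V E"
    unfolding rho_Gamma_def using finite_rho_signed_Gamma assms by (intro Max_in) auto
  then obtain \<pi> where \<pi>: "\<pi> \<in> Gamma V E" "rho_Gamma V E = rho_signed V E \<pi>" by auto
  define B where "B = signed_adj_fun V E \<pi>"
  have absB: "(\<lambda>i j. \<bar>B i j\<bar>) = adj_fun V E"
    using \<pi> unfolding B_def Gamma_def by (simp add: abs_signed_adj_fun)
  have lt: "spectral_radius (cmat ?n B) < spectral_radius (cmat ?n (\<lambda>i j. \<bar>B i j\<bar>))"
    using \<pi> absB unfolding Gamma_def rho_signed_eq_signed_adj_fun rho_eq_adj_fun B_def by simp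
  have SB: "symm ?n B" unfolding B_def by (rule signed_adj_fun_symm)
  have dgB: "\<forall>i<?n. B i i = 0" unfolding B_def using signed_adj_fun_diag[OF simple] by simp
  have cnB: "connected_support ?n (\<lambda>i j. \<bar>B i j\<bar>)" unfolding absB by (rule adj_fun_connected)
  have n0: "?n > 0" using two_vertices by simp
  obtain p q where
    pq: "p < ?n" "q < ?n" "B p q \<noteq> 0"
      "spectral_radius (cmat ?n B) < spectral_radius (cmat ?n (del_entry (adj_fun V E) p q))"
    using signed_radius_lt_del_entry_radius[OF SB dgB cnB n0 lt] unfolding absB by blast
  have "adj_fun V E p q \<noteq> 0" using pq(3) absB by (metis abs_0_eq)
  with pq del_edge_radius_le_rho_E have "spectral_radius (cmat ?n B) < rho_E V E"
    by fastforce
  thus ?thesis using \<pi> unfolding rho_signed_eq_signed_adj_fun B_def by simp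
qed

end

theorem mainTheorem3:
  fixes V :: "'a::linorder set" and E :: "'a set set"
  assumes "simple_graph V E" and "connected_graph V E" and "card V \<ge> 2"
  shows "(lambda V E 2 < rho_V V E \<and> rho_V V E \<le> rho_E V E)
       \<and> (\<not> bipartite_graph V E \<longrightarrow> - lambda V E (card V) < rho_E V E)
       \<and> (Gamma V E \<noteq> {} \<longrightarrow> rho_Gamma V E < rho_E V E)"
proof -
  interpret connected_simple_graph V E using assms by unfold_locales
  show ?thesis using lambda2_lt_rho_V rho_V_le_rho_E neg_lambda_min_lt_rho_E rho_Gamma_lt_rho_E by blast
qed

end
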